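(* Let $p\ge2$, $B_n\ge1$, $\mathbf X_1,\dots,\mathbf X_n$ iid in $\mathbb R^p$ with law $F$, and $h:\mathbb R^p\times\mathbb R^p\to\mathbb R^{p\times p}$ a measurable symmetric kernel with symmetric-matrix values such that for all $m,k$, $\max_{\ell=0,1,2}\mathbb E(|h_{mk}|^{2+\ell}/B_n^\ell)\vee\mathbb E[\exp(|h_{mk}|/B_n)]\le2$. Let $$\varpi_1(n,p)=\Big(\frac{\log p}{n}\Big)^{1/2}B_n+\frac{(\log p)(\log(np))^2}{n}B_n^2,\qquad\Delta_1=\frac1n\Big\|\sum_{i=1}^n\tilde{\mathbf g}_i\tilde{\mathbf g}_i^\top-\Gamma_g\Big\|,$$ where $\tilde{\mathbf g}_i=\mathrm{vech}(g(\mathbf X_i))$. Then $\mathbb E(\Delta_1)\le K\varpi_1(n,p)$ for some absolute constant $K>0$.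
   Context: $\|A\|=\max_{a,b}|A_{ab}|$ (entrywise max norm, for matrices of any size). $\mathbf X,\mathbf X'$ independent with law $F$; $h_{mk}=h_{mk}(\mathbf X,\mathbf X')$; $g(\mathbf x)=\mathbb Eh(\mathbf x,\mathbf X')-\mathbb Eh(\mathbf X,\mathbf X')$. $\mathrm{vech}(g)$ is the vector $(g_{jk})_{j\ge k}$ of length $p(p+1)/2$, and $\Gamma_g=\mathrm{Cov}(\mathrm{vech}(g(\mathbf X)))$. *)

theory Defs
  imports "HOL-Probability.Probability"
begin

text \<open>Points of R^p are functions nat => real (coordinates 0..p-1), with the
  Borel product sigma algebra PiM {..<p} (%_. borel). A matrix-valued kernel
  is h :: point => point => nat => nat => real, entry (m,k) being h x y m k.\<close>

type_synonym pt = "nat \<Rightarrow> real"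
type_synonym kern = "pt \<Rightarrow> pt \<Rightarrow> nat \<Rightarrow> nat \<Rightarrow> real"

definition vech_idx :: "nat \<Rightarrow> (nat \<times> nat) set" where
  "vech_idx p = {(j, k). k \<le> j \<and> j < p}"

definition gfun :: "pt measure \<Rightarrow> kern \<Rightarrow> pt \<Rightarrow> nat \<times> nat \<Rightarrow> real" where
  "gfun F h x jk =
     (\<integral>y. h x y (fst jk) (snd jk) \<partial>F)
     - (\<integral>z. h (fst z) (snd z) (fst jk) (snd jk) \<partial>(F \<Otimes>\<^sub>M F))"

definition Gamma_g :: "pt measure \<Rightarrow> kern \<Rightarrow> nat \<times> nat \<Rightarrow> nat \<times> nat \<Rightarrow> real" where
  "Gamma_g F h a b =
     (\<integral>x. gfun F h x a * gfun F h x b \<partial>F)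
     - (\<integral>x. gfun F h x a \<partial>F) * (\<integral>x. gfun F h x b \<partial>F)"

text \<open>Delta_1 = || (1/n) sum_i g_i g_i^T - Gamma_g ||_max, evaluated at a sample
  omega = (X_0,...,X_{n-1}).\<close>
definition Delta1 :: "nat \<Rightarrow> pt measure \<Rightarrow> kern \<Rightarrow> nat \<Rightarrow> (nat \<Rightarrow> pt) \<Rightarrow> real" where
  "Delta1 p F h n \<omega> =
     Max {\<bar>(1 / real n) * (\<Sum>i<n. gfun F h (\<omega> i) a * gfun F h (\<omega> i) b) - Gamma_g F h a b\<bar>
          | a b. a \<in> vech_idx p \<and> b \<in> vech_idx p}"

definition varpi1 :: "nat \<Rightarrow> nat \<Rightarrow> real \<Rightarrow> real" where
  "varpi1 n p B = sqrt (ln (real p) / real n) * B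
                 + ln (real p) * (ln (real n * real p))\<^sup>2 / real n * B\<^sup>2"

end

theory Submission
  imports Defs
begin

text \<open>
  Write g_a for the entries of the Hoeffding projection of h and Z_v = g_a g_b for the N <= p^4
  index pairs v = (a, b); then Delta_1 is the largest deviation of the empirical mean of some Z_v
  from its expectation. By Jensen's inequality the projections inherit the moment and
  exponential-moment bounds of h, so E Z_v^2 <= 664 B^2, and the part of Z_v beyond the level
  M = (2 B ln (3 N n))^2 has expectation O(B^2 / (N n)). The clipped and centred parts are bounded
  by 2 M; a log-sum-exp bound together with Bernstein's estimate of their moment generating
  functions gives E max_v |mean| <= 2 sqrt (s2 ln (3 N) / n) + 2 M ln (3 N) / n. As ln (3 N) = O(log p)
  and ln (3 N n) = O(log (n p)), the total is O(varpi_1).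
\<close>

lemma abs_le_1_plus_square: "\<bar>x::real\<bar> \<le> 1 + x\<^sup>2"
proof (cases "\<bar>x\<bar> \<le> 1")
  case False
  hence "\<bar>x\<bar> \<le> \<bar>x\<bar> * \<bar>x\<bar>" by (intro mult_le_cancel_left1[THEN iffD2]) auto
  thus ?thesis by (simp add: power2_eq_square abs_mult[symmetric])
qed (smt (verit) zero_le_power2)

lemma exp_ge_tangent: "exp (v::real) * (1 + (u - v)) \<le> exp u"
proof -
  have "exp v * (1 + (u - v)) \<le> exp v * exp (u - v)" by (intro mult_left_mono) auto
  thus ?thesis by (simp add: exp_diff)
qed

lemma power4_ge_tangent: "(m::real) ^ 4 + 4 * m ^ 3 * (y - m) \<le> y ^ 4"
proof -
  have "0 \<le> (y - m)\<^sup>2 * ((y + m)\<^sup>2 + 2 * m\<^sup>2)" by simp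
  thus ?thesis by (simp add: algebra_simps power2_eq_square power3_eq_cube power4_eq_xxxx)
qed

lemma power4_add_le: "0 \<le> a \<Longrightarrow> 0 \<le> b \<Longrightarrow> ((a::real) + b) ^ 4 \<le> 8 * (a ^ 4 + b ^ 4)"
proof -
  assume "0 \<le> a" "0 \<le> b"
  have sq: "(a + b)\<^sup>2 \<le> 2 * (a\<^sup>2 + b\<^sup>2)"
    using zero_le_power2[of "a - b"] by (simp add: power2_eq_square algebra_simps)
  have "(a + b) ^ 4 = ((a + b)\<^sup>2)\<^sup>2" by simp
  also have "\<dots> \<le> (2 * (a\<^sup>2 + b\<^sup>2))\<^sup>2" using sq by (intro power_mono) auto
  also have "\<dots> \<le> 8 * (a ^ 4 + b ^ 4)"
    using zero_le_power2[of "a\<^sup>2 - b\<^sup>2"] by (simp add: power2_eq_square power4_eq_xxxx algebra_simps)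
  finally show ?thesis .
qed

lemma exp_le_1_plus_plus_square:
  assumes "\<bar>x::real\<bar> \<le> 1" shows "exp x \<le> 1 + x + x\<^sup>2"
proof (cases "x \<ge> 0")
  case True thus ?thesis using assms exp_bound[of x] by auto
next
  case False
  define y where "y = - x"
  have y: "0 \<le> y" "y \<le> 1" using False assms by (auto simp: y_def)
  have "exp x = inverse (exp y)" by (simp add: y_def exp_minus)
  also have "\<dots> \<le> inverse (1 + y)" using y by (intro le_imp_inverse_le) auto
  also have "\<dots> \<le> 1 - y + y\<^sup>2"
  proof -
    have "1 \<le> (1 - y + y\<^sup>2) * (1 + y)" using y by (simp add: algebra_simps power2_eq_square power3_eq_cube)
    thus ?thesis using y by (simp add: inverse_eq_divide divide_le_eq)
  qed
  finally show ?thesis by (simp add: y_def)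
qed

lemma square_le_exp: assumes "0 \<le> x" shows "(x::real)\<^sup>2 / 4 \<le> 8 * exp (x / 4)"
proof -
  have "1 + x / 4 + (x / 4)\<^sup>2 / 2 \<le> exp (x / 4)" using assms by (intro exp_lower_Taylor_quadratic) auto
  hence "(x / 4)\<^sup>2 / 2 \<le> exp (x / 4)" using assms by linarith
  thus ?thesis by (simp add: power2_eq_square field_simps)
qed

lemma ln_2_ge_half: "1 / 2 \<le> ln (2::real)"
proof -
  have "(exp (1 / 2 :: real))\<^sup>2 = exp 1" by (simp add: power2_eq_square exp_add[symmetric])
  also have "\<dots> \<le> 2\<^sup>2" using exp_le by simp
  finally have "exp (1 / 2 :: real) \<le> 2" by (rule power2_le_imp_le) simp
  thus ?thesis by (subst ln_ge_iff) auto
qed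

lemma one_le_ln_3: "1 \<le> ln (3::real)"
  using exp_le by (simp add: ln_ge_iff)

lemma exp_3_le_27: "exp (3::real) \<le> 27"
proof -
  have "exp (3::real) = exp 1 ^ 3" by (simp add: exp_of_nat_mult[symmetric])
  also have "\<dots> \<le> 3 ^ 3" using exp_le by (intro power_mono) auto
  finally show ?thesis by simp
qed

lemma nn_integral_Jensen_abs:
  fixes f :: "'a \<Rightarrow> real" and \<phi> :: "real \<Rightarrow> real"
  assumes P: "prob_space M"
    and [measurable]: "f \<in> borel_measurable M" "\<phi> \<in> borel_measurable borel"
    and mono: "\<And>x y. 0 \<le> x \<Longrightarrow> x \<le> y \<Longrightarrow> \<phi> x \<le> \<phi> y"
    and nonneg: "\<And>x. 0 \<le> x \<Longrightarrow> 0 \<le> \<phi> x"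
    and tangent: "\<And>m. 0 \<le> m \<Longrightarrow> \<exists>c. \<forall>y\<ge>0. \<phi> m + c * (y - m) \<le> \<phi> y"
  shows "ennreal (\<phi> \<bar>integral\<^sup>L M f\<bar>) \<le> (\<integral>\<^sup>+x. ennreal (\<phi> \<bar>f x\<bar>) \<partial>M)"
proof (cases "integrable M f")
  case False
  interpret prob_space M by (rule P)
  \<comment> \<open>the Bochner integral of a non-integrable function is 0\<close>
  have "ennreal (\<phi> \<bar>integral\<^sup>L M f\<bar>) = (\<integral>\<^sup>+x. ennreal (\<phi> 0) \<partial>M)"
    using False by (simp add: not_integrable_integral_eq emeasure_space_1)
  also have "\<dots> \<le> (\<integral>\<^sup>+x. ennreal (\<phi> \<bar>f x\<bar>) \<partial>M)"
    by (intro nn_integral_mono ennreal_leI mono) auto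
  finally show ?thesis .
next
  case True
  interpret prob_space M by (rule P)
  define m where "m = integral\<^sup>L M (\<lambda>x. \<bar>f x\<bar>)"
  have m: "0 \<le> m" unfolding m_def by simp
  have "\<phi> \<bar>integral\<^sup>L M f\<bar> \<le> \<phi> m"
    unfolding m_def by (intro mono) (auto intro: integral_abs_bound)
  show ?thesis
  proof (cases "(\<integral>\<^sup>+x. ennreal (\<phi> \<bar>f x\<bar>) \<partial>M) = \<infinity>")
    case False
    have int_\<phi>: "integrable M (\<lambda>x. \<phi> \<bar>f x\<bar>)"
      using False nonneg by (intro integrableI_nonneg) (auto simp: top.not_eq_extremum)
    obtain c where c: "\<And>y. 0 \<le> y \<Longrightarrow> \<phi> m + c * (y - m) \<le> \<phi> y" using tangent[OF m] by blast
    have int_abs: "integrable M (\<lambda>x. \<bar>f x\<bar>)" using True by auto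
    have "\<phi> m = integral\<^sup>L M (\<lambda>x. \<phi> m + c * (\<bar>f x\<bar> - m))"
      using int_abs by (simp add: m_def prob_space)
    also have "\<dots> \<le> integral\<^sup>L M (\<lambda>x. \<phi> \<bar>f x\<bar>)"
      using int_abs int_\<phi> c by (intro integral_mono) auto
    finally have "ennreal (\<phi> \<bar>integral\<^sup>L M f\<bar>) \<le> ennreal (integral\<^sup>L M (\<lambda>x. \<phi> \<bar>f x\<bar>))"
      using \<open>\<phi> \<bar>integral\<^sup>L M f\<bar> \<le> \<phi> m\<close> by (intro ennreal_leI) linarith
    also have "\<dots> = (\<integral>\<^sup>+x. ennreal (\<phi> \<bar>f x\<bar>) \<partial>M)"
      using int_\<phi> nonneg by (subst nn_integral_eq_integral) auto
    finally show ?thesis .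
  qed simp
qed

lemma nn_integral_section_Jensen_abs:
  fixes f :: "'a \<times> 'a \<Rightarrow> real" and \<phi> :: "real \<Rightarrow> real"
  assumes P: "prob_space F"
    and f[measurable]: "f \<in> borel_measurable (F \<Otimes>\<^sub>M F)" and [measurable]: "\<phi> \<in> borel_measurable borel"
    and mono: "\<And>x y. 0 \<le> x \<Longrightarrow> x \<le> y \<Longrightarrow> \<phi> x \<le> \<phi> y"
    and nonneg: "\<And>x. 0 \<le> x \<Longrightarrow> 0 \<le> \<phi> x"
    and tangent: "\<And>m. 0 \<le> m \<Longrightarrow> \<exists>c. \<forall>y\<ge>0. \<phi> m + c * (y - m) \<le> \<phi> y"
  shows "(\<integral>\<^sup>+x. ennreal (\<phi> \<bar>\<integral>y. f (x, y) \<partial>F\<bar>) \<partial>F) \<le> (\<integral>\<^sup>+z. ennreal (\<phi> \<bar>f z\<bar>) \<partial>(F \<Otimes>\<^sub>M F))"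
proof -
  interpret prob_space F by (rule P)
  have [measurable]: "(\<lambda>z. ennreal (\<phi> \<bar>f z\<bar>)) \<in> borel_measurable (F \<Otimes>\<^sub>M F)" by measurable
  have "(\<integral>\<^sup>+x. ennreal (\<phi> \<bar>\<integral>y. f (x, y) \<partial>F\<bar>) \<partial>F) \<le> (\<integral>\<^sup>+x. \<integral>\<^sup>+y. ennreal (\<phi> \<bar>f (x, y)\<bar>) \<partial>F \<partial>F)"
    using measurable_Pair2[OF f]
    by (intro nn_integral_mono nn_integral_Jensen_abs[OF P] mono nonneg tangent) auto
  also have "\<dots> = (\<integral>\<^sup>+z. ennreal (\<phi> \<bar>f z\<bar>) \<partial>(F \<Otimes>\<^sub>M F))"
    by (intro nn_integral_fst) measurable
  finally show ?thesis .
qed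

lemma nn_integral_abs_le_1_plus_square:
  fixes f :: "'a \<Rightarrow> real"
  assumes "prob_space M" and [measurable]: "f \<in> borel_measurable M"
  shows "(\<integral>\<^sup>+x. ennreal \<bar>f x\<bar> \<partial>M) \<le> 1 + (\<integral>\<^sup>+x. ennreal ((f x)\<^sup>2) \<partial>M)"
proof -
  interpret prob_space M by fact
  have "ennreal \<bar>f x\<bar> \<le> 1 + ennreal ((f x)\<^sup>2)" for x
  proof -
    have "ennreal \<bar>f x\<bar> \<le> ennreal (1 + (f x)\<^sup>2)" by (intro ennreal_leI abs_le_1_plus_square)
    thus ?thesis by (simp add: ennreal_plus)
  qed
  hence "(\<integral>\<^sup>+x. ennreal \<bar>f x\<bar> \<partial>M) \<le> (\<integral>\<^sup>+x. 1 + ennreal ((f x)\<^sup>2) \<partial>M)"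
    by (intro nn_integral_mono)
  also have "\<dots> = 1 + (\<integral>\<^sup>+x. ennreal ((f x)\<^sup>2) \<partial>M)"
    by (subst nn_integral_add) (auto simp: emeasure_space_1)
  finally show ?thesis .
qed

lemma integrable_if_nn_integral_square_le:
  fixes f :: "'a \<Rightarrow> real"
  assumes "prob_space M" and f: "f \<in> borel_measurable M"
    and "(\<integral>\<^sup>+x. ennreal ((f x)\<^sup>2) \<partial>M) \<le> ennreal s"
  shows "integrable M f"
proof (rule integrableI_bounded[OF f])
  have "(\<integral>\<^sup>+x. ennreal (norm (f x)) \<partial>M) \<le> 1 + ennreal s"
    using nn_integral_abs_le_1_plus_square[OF assms(1,2)] assms(3) by (simp add: add_left_mono order_trans)
  also have "\<dots> < \<infinity>" by simp
  finally show "(\<integral>\<^sup>+x. ennreal (norm (f x)) \<partial>M) < \<infinity>" .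
qed

lemma nn_integral_PiM_component:
  fixes f :: "'a \<Rightarrow> ennreal"
  assumes "prob_space F" and "f \<in> borel_measurable F" and "i < n"
  shows "(\<integral>\<^sup>+\<omega>. f (\<omega> i) \<partial>PiM {..<n} (\<lambda>_. F)) = integral\<^sup>N F f"
proof -
  have "distr (PiM {..<n} (\<lambda>_. F)) F (\<lambda>\<omega>. \<omega> i) = F"
    using assms by (intro distr_PiM_component) auto
  thus ?thesis
    using assms by (metis nn_integral_distr lessThan_iff measurable_component_singleton)
qed

lemma nn_integral_PiM_exp_sum:
  fixes Y :: "'a \<Rightarrow> real"
  assumes "prob_space F" and Y: "Y \<in> borel_measurable F"
  shows "(\<integral>\<^sup>+\<omega>. ennreal (exp (t * (\<Sum>i<n. Y (\<omega> i)))) \<partial>PiM {..<n} (\<lambda>_. F))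
         = (\<integral>\<^sup>+x. ennreal (exp (t * Y x)) \<partial>F) ^ n"
proof -
  interpret product_prob_space "\<lambda>_. F"
    using assms(1) by (simp add: product_prob_space_def product_sigma_finite_def prob_space_imp_sigma_finite
        product_prob_space_axioms_def)
  have "(\<integral>\<^sup>+\<omega>. ennreal (exp (t * (\<Sum>i<n. Y (\<omega> i)))) \<partial>PiM {..<n} (\<lambda>_. F))
      = (\<integral>\<^sup>+\<omega>. (\<Prod>i<n. ennreal (exp (t * Y (\<omega> i)))) \<partial>PiM {..<n} (\<lambda>_. F))"
    by (intro nn_integral_cong) (simp add: sum_distrib_left exp_sum prod_ennreal)
  also have "\<dots> = (\<Prod>i<n. \<integral>\<^sup>+x. ennreal (exp (t * Y x)) \<partial>F)"
    using Y by (intro product_nn_integral_prod) auto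
  finally show ?thesis by simp
qed

lemma nn_integral_exp_le_of_bounded_centred:
  fixes Y :: "'a \<Rightarrow> real"
  assumes "prob_space M" and Y[measurable]: "Y \<in> borel_measurable M"
    and bounded: "\<And>x. x \<in> space M \<Longrightarrow> \<bar>Y x\<bar> \<le> c"
    and mean: "integral\<^sup>L M Y = 0" and var: "integral\<^sup>L M (\<lambda>x. (Y x)\<^sup>2) \<le> s2"
    and t: "\<bar>t\<bar> * c \<le> 1"
  shows "(\<integral>\<^sup>+x. ennreal (exp (t * Y x)) \<partial>M) \<le> ennreal (exp (t\<^sup>2 * s2))"
proof -
  interpret prob_space M by fact
  have int_Y: "integrable M Y" using bounded by (intro integrable_const_bound[where B=c]) auto
  have "\<bar>(Y x)\<^sup>2\<bar> \<le> c\<^sup>2" if "x \<in> space M" for x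
    using power_mono[OF bounded[OF that], of 2] by simp
  hence int_Y2: "integrable M (\<lambda>x. (Y x)\<^sup>2)" by (intro integrable_const_bound[where B="c\<^sup>2"]) auto
  have "exp (t * Y x) \<le> 1 + t * Y x + t\<^sup>2 * (Y x)\<^sup>2" if "x \<in> space M" for x
  proof -
    have "\<bar>t * Y x\<bar> \<le> \<bar>t\<bar> * c" using bounded[OF that] by (simp add: abs_mult mult_left_mono)
    hence "exp (t * Y x) \<le> 1 + t * Y x + (t * Y x)\<^sup>2"
      using t by (intro exp_le_1_plus_plus_square) linarith
    thus ?thesis by (simp add: power_mult_distrib)
  qed
  hence "(\<integral>\<^sup>+x. ennreal (exp (t * Y x)) \<partial>M) \<le> (\<integral>\<^sup>+x. ennreal (1 + t * Y x + t\<^sup>2 * (Y x)\<^sup>2) \<partial>M)"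
    by (intro nn_integral_mono ennreal_leI) auto
  also have "\<dots> = ennreal (integral\<^sup>L M (\<lambda>x. 1 + t * Y x + t\<^sup>2 * (Y x)\<^sup>2))"
  proof (rule nn_integral_eq_integral)
    show "integrable M (\<lambda>x. 1 + t * Y x + t\<^sup>2 * (Y x)\<^sup>2)" using int_Y int_Y2 by auto
    have "0 \<le> 1 + z + z\<^sup>2" for z :: real
      using zero_le_power2[of "z + 1 / 2"] by (simp add: power2_eq_square algebra_simps)
    thus "AE x in M. 0 \<le> 1 + t * Y x + t\<^sup>2 * (Y x)\<^sup>2" by (simp flip: power_mult_distrib)
  qed
  also have "integral\<^sup>L M (\<lambda>x. 1 + t * Y x + t\<^sup>2 * (Y x)\<^sup>2)
      = integral\<^sup>L M (\<lambda>x. 1 + t * Y x) + integral\<^sup>L M (\<lambda>x. t\<^sup>2 * (Y x)\<^sup>2)"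
    using int_Y int_Y2 by (intro Bochner_Integration.integral_add) auto
  also have "integral\<^sup>L M (\<lambda>x. 1 + t * Y x) = 1"
    using int_Y mean by (simp add: prob_space)
  also have "integral\<^sup>L M (\<lambda>x. t\<^sup>2 * (Y x)\<^sup>2) \<le> t\<^sup>2 * s2"
    using var by (simp add: mult_left_mono)
  also have "1 + t\<^sup>2 * s2 \<le> exp (t\<^sup>2 * s2)" by simp
  finally show ?thesis by (simp add: ennreal_leI)
qed

lemma nn_integral_exp_sum_PiM_le:
  fixes Y :: "'a \<Rightarrow> real"
  assumes "prob_space F" and "Y \<in> borel_measurable F"
    and "\<And>x. x \<in> space F \<Longrightarrow> \<bar>Y x\<bar> \<le> c"
    and "integral\<^sup>L F Y = 0" and "integral\<^sup>L F (\<lambda>x. (Y x)\<^sup>2) \<le> s2"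
    and "\<bar>t\<bar> * c \<le> 1"
  shows "(\<integral>\<^sup>+\<omega>. ennreal (exp (t * (\<Sum>i<n. Y (\<omega> i)))) \<partial>PiM {..<n} (\<lambda>_. F))
         \<le> ennreal (exp (real n * (t\<^sup>2 * s2)))"
proof -
  have "(\<integral>\<^sup>+\<omega>. ennreal (exp (t * (\<Sum>i<n. Y (\<omega> i)))) \<partial>PiM {..<n} (\<lambda>_. F))
      = (\<integral>\<^sup>+x. ennreal (exp (t * Y x)) \<partial>F) ^ n"
    using assms(1,2) by (rule nn_integral_PiM_exp_sum)
  also have "\<dots> \<le> ennreal (exp (t\<^sup>2 * s2)) ^ n"
    using assms by (intro power_mono nn_integral_exp_le_of_bounded_centred) auto
  also have "\<dots> = ennreal (exp (real n * (t\<^sup>2 * s2)))"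
    by (simp add: ennreal_power exp_of_nat_mult)
  finally show ?thesis .
qed

section \<open>Maximal inequality for empirical means of bounded variables\<close>

text \<open>The tangent bound ln W \<le> ln U + W / U - 1 replaces Jensen's inequality for ln, so that the
  maximum is controlled by the expectations of the exponentials themselves.\<close>
lemma abs_le_log_sum_exp:
  fixes x :: "'b \<Rightarrow> real"
  assumes V: "finite V" "v \<in> V" and lam: "0 < lam" and U: "0 < U"
  shows "\<bar>x v\<bar> \<le> (ln U - 1) / lam + (\<Sum>w\<in>V. exp (lam * x w) + exp (- lam * x w)) / (lam * U)"
proof -
  define W where "W = (\<Sum>w\<in>V. exp (lam * x w) + exp (- lam * x w))"
  have "exp (lam * \<bar>x v\<bar>) \<le> exp (lam * x v) + exp (- lam * x v)"
    by (cases "x v \<ge> 0") (auto simp: add_increasing add_increasing2)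
  also have "\<dots> \<le> W"
    unfolding W_def using V by (intro member_le_sum[where f="\<lambda>w. exp (lam * x w) + exp (- lam * x w)"]) auto
  finally have W: "exp (lam * \<bar>x v\<bar>) \<le> W" .
  have W0: "0 < W" using W by (meson exp_gt_zero less_le_trans)
  have "lam * \<bar>x v\<bar> \<le> ln W" using W W0 by (metis ln_exp ln_le_cancel_iff exp_gt_zero)
  also have "ln W = ln U + ln (W / U)" using W0 U by (simp add: ln_div)
  also have "ln (W / U) \<le> W / U - 1" using W0 U by (intro ln_le_minus_one) auto
  finally have "lam * \<bar>x v\<bar> \<le> (ln U - 1) + W / U" by simp
  thus ?thesis using lam U unfolding W_def[symmetric] by (simp add: field_simps)
qed

lemma exists_rate_tradeoff:
  fixes c s2 L x :: real
  assumes c: "0 < c" and s2: "0 < s2" and L: "0 < L" and x: "0 < x"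
  obtains lam where "0 < lam" "lam * c \<le> x" "L / lam + lam * s2 / x \<le> 2 * sqrt (s2 * L / x) + c * L / x"
proof -
  define b where "b = sqrt (x * L / s2)"
  define q where "q = sqrt (s2 * L / x)"
  define lam where "lam = min (x / c) b"
  have b: "0 < b" unfolding b_def using x L s2 by simp
  have lam: "0 < lam" unfolding lam_def using x c b by simp
  have bq: "b * q = L"
    unfolding b_def q_def real_sqrt_mult[symmetric] using x s2 L by (simp add: field_simps)
  have bs2: "b * s2 / x = q"
  proof -
    have "q = sqrt (x * L / s2 * (s2 / x)\<^sup>2)"
      unfolding q_def using x s2 by (simp add: field_simps power2_eq_square)
    also have "\<dots> = b * (s2 / x)" unfolding b_def real_sqrt_mult using x s2 by simp
    finally show ?thesis by simp
  qed
  have "L / lam \<le> c * L / x + q"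
  proof (cases "x / c \<le> b")
    case True
    hence "L / lam = c * L / x" unfolding lam_def using x c by (simp add: field_simps)
    thus ?thesis unfolding q_def using s2 L x by simp
  next
    case False
    hence "L / lam = q" unfolding lam_def using bq b by (auto simp: field_simps)
    thus ?thesis using c L x by simp
  qed
  moreover have "lam * s2 / x \<le> q"
    unfolding bs2[symmetric] lam_def using s2 x by (intro divide_right_mono mult_right_mono) auto
  moreover have "lam * c \<le> x" unfolding lam_def using c by (simp add: min_def field_simps)
  ultimately show ?thesis using that lam unfolding q_def by force
qed

lemma nn_integral_Max_abs_le_log_sum_exp:
  fixes S :: "'b \<Rightarrow> 'a \<Rightarrow> real"
  assumes P: "prob_space M" and V: "finite V" "V \<noteq> {}"
    and [measurable]: "\<And>v. v \<in> V \<Longrightarrow> S v \<in> borel_measurable M"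
    and lam: "0 < lam" and U: "0 < U" "1 \<le> ln U" and E: "0 \<le> E"
    and mgf: "\<And>v \<sigma>. v \<in> V \<Longrightarrow> \<bar>\<sigma>\<bar> = 1 \<Longrightarrow> (\<integral>\<^sup>+\<omega>. ennreal (exp (\<sigma> * lam * S v \<omega>)) \<partial>M) \<le> ennreal E"
  shows "(\<integral>\<^sup>+\<omega>. ennreal (Max ((\<lambda>v. \<bar>S v \<omega>\<bar>) ` V)) \<partial>M)
    \<le> ennreal ((ln U - 1) / lam + 2 * real (card V) * E / (lam * U))"
proof -
  interpret prob_space M by (rule P)
  define e where "e \<sigma> v = (\<lambda>\<omega>. ennreal (exp (\<sigma> * lam * S v \<omega>)))" for \<sigma> v
  define a where "a = (ln U - 1) / lam"
  define b where "b = 1 / (lam * U)"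
  have ab: "0 \<le> a" "0 \<le> b" using U lam by (auto simp: a_def b_def)
  have [measurable]: "e \<sigma> v \<in> borel_measurable M" if "v \<in> V" for \<sigma> v
    unfolding e_def using that by measurable
  have "ennreal (Max ((\<lambda>v. \<bar>S v \<omega>\<bar>) ` V)) \<le> ennreal a + ennreal b * (\<Sum>v\<in>V. e 1 v \<omega> + e (-1) v \<omega>)" for \<omega>
  proof -
    have "Max ((\<lambda>v. \<bar>S v \<omega>\<bar>) ` V) \<le> a + b * (\<Sum>v\<in>V. exp (lam * S v \<omega>) + exp (- lam * S v \<omega>))"
      using V abs_le_log_sum_exp[OF V(1) _ lam U(1), of _ "\<lambda>v. S v \<omega>"]
      by (subst Max_le_iff) (auto simp: a_def b_def)
    hence "ennreal (Max ((\<lambda>v. \<bar>S v \<omega>\<bar>) ` V))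
        \<le> ennreal (a + b * (\<Sum>v\<in>V. exp (lam * S v \<omega>) + exp (- lam * S v \<omega>)))"
      by (rule ennreal_leI)
    also have "\<dots> = ennreal a + ennreal b * ennreal (\<Sum>v\<in>V. exp (lam * S v \<omega>) + exp (- lam * S v \<omega>))"
      using ab by (simp add: ennreal_mult sum_nonneg)
    also have "ennreal (\<Sum>v\<in>V. exp (lam * S v \<omega>) + exp (- lam * S v \<omega>)) = (\<Sum>v\<in>V. e 1 v \<omega> + e (-1) v \<omega>)"
      by (subst sum_ennreal[symmetric]) (auto simp: e_def intro!: sum.cong add_nonneg_nonneg)
    finally show ?thesis .
  qed
  hence "(\<integral>\<^sup>+\<omega>. ennreal (Max ((\<lambda>v. \<bar>S v \<omega>\<bar>) ` V)) \<partial>M)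
      \<le> (\<integral>\<^sup>+\<omega>. ennreal a + ennreal b * (\<Sum>v\<in>V. e 1 v \<omega> + e (-1) v \<omega>) \<partial>M)"
    by (intro nn_integral_mono)
  also have "\<dots> = ennreal a + ennreal b * (\<integral>\<^sup>+\<omega>. (\<Sum>v\<in>V. e 1 v \<omega> + e (-1) v \<omega>) \<partial>M)"
    by (simp add: nn_integral_add nn_integral_cmult emeasure_space_1)
  also have "\<dots> = ennreal a + ennreal b * (\<Sum>v\<in>V. integral\<^sup>N M (e 1 v) + integral\<^sup>N M (e (-1) v))"
    by (subst nn_integral_sum) (auto intro!: arg_cong[where f="(*) (ennreal b)"] sum.cong nn_integral_add)
  also have "\<dots> \<le> ennreal a + ennreal b * (\<Sum>v\<in>V. ennreal E + ennreal E)"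
    using mgf[of _ 1] mgf[of _ "-1"]
    by (intro add_left_mono mult_left_mono sum_mono add_mono) (auto simp: e_def)
  also have "(\<Sum>v\<in>V. ennreal E + ennreal E) = ennreal (2 * real (card V) * E)"
    using E by (simp add: ennreal_mult ennreal_of_nat_eq_real_of_nat mult_ac flip: ennreal_plus)
  also have "ennreal a + ennreal b * \<dots> = ennreal (a + b * (2 * real (card V) * E))"
    using ab E by (simp add: ennreal_plus ennreal_mult)
  also have "a + b * (2 * real (card V) * E) = (ln U - 1) / lam + 2 * real (card V) * E / (lam * U)"
    by (simp add: a_def b_def)
  finally show ?thesis .
qed

lemma nn_integral_Max_abs_mean_le:
  fixes F :: "'a measure" and V :: "'b set" and Y :: "'b \<Rightarrow> 'a \<Rightarrow> real"
  assumes P: "prob_space F" and V: "finite V" "V \<noteq> {}" and n: "0 < n"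
    and Y[measurable]: "\<And>v. v \<in> V \<Longrightarrow> Y v \<in> borel_measurable F"
    and bounded: "\<And>v x. v \<in> V \<Longrightarrow> x \<in> space F \<Longrightarrow> \<bar>Y v x\<bar> \<le> c"
    and mean: "\<And>v. v \<in> V \<Longrightarrow> integral\<^sup>L F (Y v) = 0"
    and var: "\<And>v. v \<in> V \<Longrightarrow> integral\<^sup>L F (\<lambda>x. (Y v x)\<^sup>2) \<le> s2"
    and lam: "0 < lam" "lam * c \<le> real n"
  shows "(\<integral>\<^sup>+\<omega>. ennreal (Max ((\<lambda>v. \<bar>(1 / real n) * (\<Sum>i<n. Y v (\<omega> i))\<bar>) ` V)) \<partial>PiM {..<n} (\<lambda>_. F))
    \<le> ennreal (ln (3 * real (card V)) / lam + lam * s2 / real n)"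
proof -
  interpret prob_space F by (rule P)
  define N where "N = real (card V)"
  define E where "E = exp (lam\<^sup>2 * s2 / real n)"
  \<comment> \<open>with this U the exponential moments contribute 2 / (3 lam), absorbed by the - 1 / lam\<close>
  define U where "U = 3 * N * E"
  define S where "S v \<omega> = (1 / real n) * (\<Sum>i<n. Y v (\<omega> i))" for v \<omega>
  have N: "1 \<le> N" unfolding N_def using V by (simp add: Suc_le_eq card_gt_0_iff)
  have s2: "0 \<le> s2"
  proof -
    obtain v where "v \<in> V" using V(2) by blast
    moreover have "0 \<le> integral\<^sup>L F (\<lambda>x. (Y v x)\<^sup>2)" by (simp add: integral_nonneg_AE)
    ultimately show ?thesis using var by (meson order_trans)
  qed
  have E: "1 \<le> E" unfolding E_def using s2 n by simp
  have lnU: "ln U = ln (3 * N) + lam\<^sup>2 * s2 / real n"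
    unfolding U_def E_def using N by (simp add: ln_mult)
  have "ln 3 \<le> ln (3 * N)" "0 \<le> lam\<^sup>2 * s2 / real n" using N s2 by simp_all
  hence lnU1: "1 \<le> ln U" using lnU one_le_ln_3 by linarith
  have S_meas: "S v \<in> borel_measurable (PiM {..<n} (\<lambda>_. F))" if "v \<in> V" for v
    unfolding S_def[abs_def] using Y[OF that]
    by (auto intro!: borel_measurable_sum borel_measurable_times
        measurable_compose[OF measurable_component_singleton])
  have mgf: "(\<integral>\<^sup>+\<omega>. ennreal (exp (\<sigma> * lam * S v \<omega>)) \<partial>PiM {..<n} (\<lambda>_. F)) \<le> ennreal E"
    if v: "v \<in> V" and \<sigma>: "\<bar>\<sigma>\<bar> = 1" for \<sigma> v
  proof -
    define t where "t = \<sigma> * lam / real n"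
    have "\<bar>t\<bar> * c \<le> 1" using \<sigma> lam n by (simp add: t_def abs_mult field_simps)
    note bound = nn_integral_exp_sum_PiM_le[OF P Y[OF v] bounded[OF v] mean[OF v] var[OF v] this, of n]
    have "real n * (t\<^sup>2 * s2) = lam\<^sup>2 * s2 / real n"
      using \<sigma> n by (simp add: t_def power2_eq_square field_simps) (metis abs_mult_self_eq mult_1)
    moreover have "\<sigma> * lam * S v \<omega> = t * (\<Sum>i<n. Y v (\<omega> i))" for \<omega>
      by (simp add: S_def t_def)
    ultimately show ?thesis using bound by (simp add: E_def)
  qed
  have "(\<integral>\<^sup>+\<omega>. ennreal (Max ((\<lambda>v. \<bar>S v \<omega>\<bar>) ` V)) \<partial>PiM {..<n} (\<lambda>_. F))
      \<le> ennreal ((ln U - 1) / lam + 2 * N * E / (lam * U))"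
    unfolding N_def using E N lnU1
    by (intro nn_integral_Max_abs_le_log_sum_exp prob_space_PiM P V S_meas lam mgf) (auto simp: U_def)
  also have "(ln U - 1) / lam + 2 * N * E / (lam * U) \<le> ln U / lam"
    using N E lam by (simp add: U_def field_simps)
  also have "ln U / lam = ln (3 * N) / lam + lam * s2 / real n"
    unfolding lnU using lam by (simp add: field_simps power2_eq_square)
  finally show ?thesis by (simp add: S_def N_def ennreal_leI)
qed

section \<open>Truncation\<close>

definition clip :: "real \<Rightarrow> real \<Rightarrow> real" where
  "clip M z = max (- M) (min M z)"

lemma abs_clip_le: "0 \<le> M \<Longrightarrow> \<bar>clip M z\<bar> \<le> M"
  by (simp add: clip_def)

lemma abs_clip_le_abs: "0 \<le> M \<Longrightarrow> \<bar>clip M z\<bar> \<le> \<bar>z\<bar>"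
  by (simp add: clip_def)

lemma clip_eq_self: "\<bar>z\<bar> \<le> M \<Longrightarrow> clip M z = z"
  by (simp add: clip_def)

lemma borel_measurable_clip[measurable]: "clip M \<in> borel_measurable borel"
  unfolding clip_def by measurable

lemma clip_centred:
  fixes Z :: "'a \<Rightarrow> real"
  assumes P: "prob_space F" and [measurable]: "Z \<in> borel_measurable F"
    and sq: "(\<integral>\<^sup>+x. ennreal ((Z x)\<^sup>2) \<partial>F) \<le> ennreal s2" and s2: "0 \<le> s2" and M: "0 \<le> M"
  defines "Y \<equiv> \<lambda>x. clip M (Z x) - (\<integral>x. clip M (Z x) \<partial>F)"
  shows "Y \<in> borel_measurable F" and "\<bar>Y x\<bar> \<le> 2 * M" and "integral\<^sup>L F Y = 0"
    and "integral\<^sup>L F (\<lambda>x. (Y x)\<^sup>2) \<le> s2"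
proof -
  interpret prob_space F by (rule P)
  define T where "T x = clip M (Z x)" for x
  have [measurable]: "T \<in> borel_measurable F" unfolding T_def by measurable
  have T: "\<bar>T x\<bar> \<le> M" for x unfolding T_def using M by (rule abs_clip_le)
  have int_T: "integrable F T" using T by (intro integrable_const_bound[where B=M]) auto
  have "\<bar>(T x)\<^sup>2\<bar> \<le> M\<^sup>2" for x using power_mono[OF T, where n=2] by simp
  hence int_T2: "integrable F (\<lambda>x. (T x)\<^sup>2)" by (intro integrable_const_bound[where B="M\<^sup>2"]) auto
  have "- M \<le> T x" "T x \<le> M" for x using T[of x] by linarith+
  hence "- M \<le> integral\<^sup>L F T" "integral\<^sup>L F T \<le> M"
    using int_T by (auto intro!: integral_ge_const integral_le_const)
  hence ET: "\<bar>integral\<^sup>L F T\<bar> \<le> M" by simp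
  have Y: "Y = (\<lambda>x. T x - integral\<^sup>L F T)" unfolding Y_def T_def ..
  show "Y \<in> borel_measurable F" unfolding Y by measurable
  show "\<bar>Y x\<bar> \<le> 2 * M" unfolding Y using T[of x] ET by linarith
  show "integral\<^sup>L F Y = 0" unfolding Y using int_T by (simp add: prob_space)
  have "ennreal (integral\<^sup>L F (\<lambda>x. (T x)\<^sup>2)) = (\<integral>\<^sup>+x. ennreal ((T x)\<^sup>2) \<partial>F)"
    using int_T2 by (subst nn_integral_eq_integral) auto
  also have "\<dots> \<le> (\<integral>\<^sup>+x. ennreal ((Z x)\<^sup>2) \<partial>F)"
  proof (intro nn_integral_mono ennreal_leI)
    fix x
    have "\<bar>T x\<bar>\<^sup>2 \<le> \<bar>Z x\<bar>\<^sup>2" unfolding T_def using M by (intro power_mono abs_clip_le_abs) auto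
    thus "(T x)\<^sup>2 \<le> (Z x)\<^sup>2" by simp
  qed
  also have "\<dots> \<le> ennreal s2" by (rule sq)
  finally have "integral\<^sup>L F (\<lambda>x. (T x)\<^sup>2) \<le> s2" using s2 by (simp add: ennreal_le_iff)
  moreover have "integral\<^sup>L F (\<lambda>x. (Y x)\<^sup>2) = integral\<^sup>L F (\<lambda>x. (T x)\<^sup>2) - (integral\<^sup>L F T)\<^sup>2"
    unfolding Y using int_T int_T2 by (rule variance_eq)
  ultimately show "integral\<^sup>L F (\<lambda>x. (Y x)\<^sup>2) \<le> s2" using zero_le_power2[of "integral\<^sup>L F T"] by linarith
qed

lemma Max_abs_mean_sub_le:
  fixes z y r :: "'b \<Rightarrow> nat \<Rightarrow> real" and c \<mu> :: "'b \<Rightarrow> real"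
  assumes V: "finite V" "V \<noteq> {}" and n: "0 < n"
    and split: "\<And>v i. v \<in> V \<Longrightarrow> z v i = y v i + c v + r v i"
    and centre: "\<And>v. v \<in> V \<Longrightarrow> \<bar>\<mu> v - c v\<bar> \<le> \<epsilon>"
  shows "Max ((\<lambda>v. \<bar>(1 / real n) * (\<Sum>i<n. z v i) - \<mu> v\<bar>) ` V)
    \<le> Max ((\<lambda>v. \<bar>(1 / real n) * (\<Sum>i<n. y v i)\<bar>) ` V) + (1 / real n) * (\<Sum>i<n. \<Sum>v\<in>V. \<bar>r v i\<bar>) + \<epsilon>"
proof (subst Max_le_iff, goal_cases)
  case 3
  show ?case
  proof (intro ballI, elim imageE)
    fix x v assume v: "v \<in> V" and x: "x = \<bar>(1 / real n) * (\<Sum>i<n. z v i) - \<mu> v\<bar>"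
    have "(1 / real n) * (\<Sum>i<n. z v i) - \<mu> v
        = (1 / real n) * (\<Sum>i<n. y v i) + (1 / real n) * (\<Sum>i<n. r v i) + (c v - \<mu> v)"
      using n v split by (simp add: sum.distrib field_simps)
    moreover have "\<bar>(1 / real n) * (\<Sum>i<n. y v i)\<bar> \<le> Max ((\<lambda>v. \<bar>(1 / real n) * (\<Sum>i<n. y v i)\<bar>) ` V)"
      using V v by (intro Max_ge) auto
    moreover have "\<bar>\<Sum>i<n. r v i\<bar> \<le> (\<Sum>i<n. \<Sum>v\<in>V. \<bar>r v i\<bar>)"
      using V v by (intro order_trans[OF sum_abs] sum_mono member_le_sum) auto
    hence "\<bar>(1 / real n) * (\<Sum>i<n. r v i)\<bar> \<le> (1 / real n) * (\<Sum>i<n. \<Sum>v\<in>V. \<bar>r v i\<bar>)"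
      using n by (simp add: abs_mult divide_right_mono)
    ultimately show "x \<le> Max ((\<lambda>v. \<bar>(1 / real n) * (\<Sum>i<n. y v i)\<bar>) ` V)
        + (1 / real n) * (\<Sum>i<n. \<Sum>v\<in>V. \<bar>r v i\<bar>) + \<epsilon>"
      using centre[OF v] x by linarith
  qed
qed (use V in auto)

lemma borel_measurable_PiM_component:
  assumes "g \<in> borel_measurable F" and "i < n"
  shows "(\<lambda>\<omega>. g (\<omega> i)) \<in> borel_measurable (PiM {..<n} (\<lambda>_. F))"
  using assms by (auto intro: measurable_compose[OF measurable_component_singleton])

lemma borel_measurable_Max_abs_mean:
  fixes Y :: "'b \<Rightarrow> 'a \<Rightarrow> real"
  assumes "finite V" and "\<And>v. v \<in> V \<Longrightarrow> Y v \<in> borel_measurable F"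
  shows "(\<lambda>\<omega>. Max ((\<lambda>v. \<bar>(1 / real n) * (\<Sum>i<n. Y v (\<omega> i))\<bar>) ` V)) \<in> borel_measurable (PiM {..<n} (\<lambda>_. F))"
proof (rule borel_measurable_Max[OF assms(1)])
  fix v assume "v \<in> V"
  hence "(\<lambda>\<omega>. \<Sum>i<n. Y v (\<omega> i)) \<in> borel_measurable (PiM {..<n} (\<lambda>_. F))"
    using borel_measurable_PiM_component[OF assms(2)] by (intro borel_measurable_sum) simp
  thus "(\<lambda>\<omega>. \<bar>(1 / real n) * (\<Sum>i<n. Y v (\<omega> i))\<bar>) \<in> borel_measurable (PiM {..<n} (\<lambda>_. F))"
    by measurable
qed

lemma borel_measurable_PiM_sum_sum:
  fixes f :: "'b \<Rightarrow> 'a \<Rightarrow> ennreal"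
  assumes "\<And>v. v \<in> V \<Longrightarrow> f v \<in> borel_measurable F"
  shows "(\<lambda>\<omega>. \<Sum>i<n. \<Sum>v\<in>V. f v (\<omega> i)) \<in> borel_measurable (PiM {..<n} (\<lambda>_. F))"
  using borel_measurable_PiM_component[OF assms] by (intro borel_measurable_sum) auto

lemma nn_integral_PiM_mean_sum:
  fixes f :: "'b \<Rightarrow> 'a \<Rightarrow> ennreal"
  assumes P: "prob_space F" and n: "0 < n" and f: "\<And>v. v \<in> V \<Longrightarrow> f v \<in> borel_measurable F"
  shows "(\<integral>\<^sup>+\<omega>. ennreal (1 / real n) * (\<Sum>i<n. \<Sum>v\<in>V. f v (\<omega> i)) \<partial>PiM {..<n} (\<lambda>_. F))
    = (\<Sum>v\<in>V. integral\<^sup>N F (f v))"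
proof -
  have meas: "(\<lambda>\<omega>. f v (\<omega> i)) \<in> borel_measurable (PiM {..<n} (\<lambda>_. F))" if "v \<in> V" "i < n" for v i
    using borel_measurable_PiM_component[OF f[OF that(1)] that(2)] .
  have "(\<integral>\<^sup>+\<omega>. (\<Sum>i<n. \<Sum>v\<in>V. f v (\<omega> i)) \<partial>PiM {..<n} (\<lambda>_. F))
      = (\<Sum>i<n. \<integral>\<^sup>+\<omega>. (\<Sum>v\<in>V. f v (\<omega> i)) \<partial>PiM {..<n} (\<lambda>_. F))"
    using meas by (intro nn_integral_sum borel_measurable_sum) auto
  also have "\<dots> = (\<Sum>i<n. \<Sum>v\<in>V. \<integral>\<^sup>+\<omega>. f v (\<omega> i) \<partial>PiM {..<n} (\<lambda>_. F))"
    using meas by (intro sum.cong refl nn_integral_sum) auto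
  also have "\<dots> = (\<Sum>i<n. \<Sum>v\<in>V. integral\<^sup>N F (f v))"
    using nn_integral_PiM_component[OF P f] by (intro sum.cong refl) auto
  also have "\<dots> = of_nat n * (\<Sum>v\<in>V. integral\<^sup>N F (f v))" by simp
  finally show ?thesis
    using meas n by (simp add: nn_integral_cmult borel_measurable_sum ennreal_of_nat_eq_real_of_nat
        mult.assoc[symmetric] flip: ennreal_mult)
qed

lemma abs_integral_sub_integral_clip_le:
  fixes Z :: "'a \<Rightarrow> real"
  assumes P: "prob_space F" and Z[measurable]: "Z \<in> borel_measurable F"
    and sq: "(\<integral>\<^sup>+x. ennreal ((Z x)\<^sup>2) \<partial>F) \<le> ennreal s2" and M: "0 \<le> M" and \<epsilon>: "0 \<le> \<epsilon>"
    and tail: "(\<integral>\<^sup>+x. ennreal \<bar>Z x - clip M (Z x)\<bar> \<partial>F) \<le> ennreal \<epsilon>"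
  shows "\<bar>integral\<^sup>L F Z - (\<integral>x. clip M (Z x) \<partial>F)\<bar> \<le> \<epsilon>"
proof -
  interpret prob_space F by (rule P)
  have "integrable F (\<lambda>x. clip M (Z x))"
    using M abs_clip_le by (intro integrable_const_bound[where B=M]) auto
  moreover have "integrable F Z" using integrable_if_nn_integral_square_le[OF P Z sq] .
  ultimately have "ennreal \<bar>integral\<^sup>L F Z - (\<integral>x. clip M (Z x) \<partial>F)\<bar> \<le> (\<integral>\<^sup>+x. ennreal \<bar>Z x - clip M (Z x)\<bar> \<partial>F)"
    using integral_norm_bound_ennreal[of F "\<lambda>x. Z x - clip M (Z x)"] by simp
  also have "\<dots> \<le> ennreal \<epsilon>" by (rule tail)
  finally show ?thesis using \<epsilon> by (simp add: ennreal_le_iff)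
qed

lemma nn_integral_Max_abs_mean_le_rate:
  fixes F :: "'a measure" and V :: "'b set" and Y :: "'b \<Rightarrow> 'a \<Rightarrow> real"
  assumes P: "prob_space F" and V: "finite V" "V \<noteq> {}" and n: "0 < n" and c: "0 < c" and s2: "0 < s2"
    and Y: "\<And>v. v \<in> V \<Longrightarrow> Y v \<in> borel_measurable F"
    and bounded: "\<And>v x. v \<in> V \<Longrightarrow> x \<in> space F \<Longrightarrow> \<bar>Y v x\<bar> \<le> c"
    and mean: "\<And>v. v \<in> V \<Longrightarrow> integral\<^sup>L F (Y v) = 0"
    and var: "\<And>v. v \<in> V \<Longrightarrow> integral\<^sup>L F (\<lambda>x. (Y v x)\<^sup>2) \<le> s2"
  shows "(\<integral>\<^sup>+\<omega>. ennreal (Max ((\<lambda>v. \<bar>(1 / real n) * (\<Sum>i<n. Y v (\<omega> i))\<bar>) ` V)) \<partial>PiM {..<n} (\<lambda>_. F))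
    \<le> ennreal (2 * sqrt (s2 * ln (3 * real (card V)) / real n) + c * ln (3 * real (card V)) / real n)"
proof -
  define L where "L = ln (3 * real (card V))"
  have "ln 3 \<le> L" unfolding L_def using V by (simp add: Suc_le_eq card_gt_0_iff)
  hence "0 < L" using one_le_ln_3 by linarith
  then obtain lam where lam: "0 < lam" "lam * c \<le> real n"
      "L / lam + lam * s2 / real n \<le> 2 * sqrt (s2 * L / real n) + c * L / real n"
    using exists_rate_tradeoff[of c s2 L "real n"] c s2 n by auto
  have "(\<integral>\<^sup>+\<omega>. ennreal (Max ((\<lambda>v. \<bar>(1 / real n) * (\<Sum>i<n. Y v (\<omega> i))\<bar>) ` V)) \<partial>PiM {..<n} (\<lambda>_. F))
      \<le> ennreal (L / lam + lam * s2 / real n)"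
    unfolding L_def using assms lam by (intro nn_integral_Max_abs_mean_le) auto
  also have "\<dots> \<le> ennreal (2 * sqrt (s2 * L / real n) + c * L / real n)" using lam(3) by (rule ennreal_leI)
  finally show ?thesis unfolding L_def .
qed

lemma nn_integral_Max_abs_mean_truncated_le:
  fixes F :: "'a measure" and V :: "'b set" and Z :: "'b \<Rightarrow> 'a \<Rightarrow> real"
  assumes P: "prob_space F" and V: "finite V" "V \<noteq> {}" and n: "0 < n"
    and M: "0 < M" and s2: "0 < s2" and \<epsilon>: "0 \<le> \<epsilon>"
    and Z[measurable]: "\<And>v. v \<in> V \<Longrightarrow> Z v \<in> borel_measurable F"
    and sq: "\<And>v. v \<in> V \<Longrightarrow> (\<integral>\<^sup>+x. ennreal ((Z v x)\<^sup>2) \<partial>F) \<le> ennreal s2"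
    and tail: "\<And>v. v \<in> V \<Longrightarrow> (\<integral>\<^sup>+x. ennreal \<bar>Z v x - clip M (Z v x)\<bar> \<partial>F) \<le> ennreal \<epsilon>"
  shows "(\<integral>\<^sup>+\<omega>. ennreal (Max ((\<lambda>v. \<bar>(1 / real n) * (\<Sum>i<n. Z v (\<omega> i)) - integral\<^sup>L F (Z v)\<bar>) ` V))
            \<partial>PiM {..<n} (\<lambda>_. F))
      \<le> ennreal (2 * sqrt (s2 * ln (3 * real (card V)) / real n) + 2 * M * ln (3 * real (card V)) / real n
                 + 2 * real (card V) * \<epsilon>)"
proof -
  define Pn where "Pn = PiM {..<n} (\<lambda>_. F)"
  define N where "N = real (card V)"
  define bound where "bound = 2 * sqrt (s2 * ln (3 * N) / real n) + 2 * M * ln (3 * N) / real n"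
  define c where "c v = (\<integral>x. clip M (Z v x) \<partial>F)" for v
  define Y where "Y v = (\<lambda>x. clip M (Z v x) - c v)" for v
  define R where "R v = (\<lambda>x. ennreal \<bar>Z v x - clip M (Z v x)\<bar>)" for v
  have N: "1 \<le> N" unfolding N_def using V by (simp add: Suc_le_eq card_gt_0_iff)
  define MY where "MY \<omega> = Max ((\<lambda>v. \<bar>(1 / real n) * (\<Sum>i<n. Y v (\<omega> i))\<bar>) ` V)" for \<omega>
  have Y: "Y v \<in> borel_measurable F" "\<And>x. \<bar>Y v x\<bar> \<le> 2 * M" "integral\<^sup>L F (Y v) = 0"
      "integral\<^sup>L F (\<lambda>x. (Y v x)\<^sup>2) \<le> s2" if "v \<in> V" for v
    unfolding Y_def c_def using clip_centred[OF P Z[OF that] sq[OF that]] s2 M by auto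
  have centre: "\<bar>integral\<^sup>L F (Z v) - c v\<bar> \<le> \<epsilon>" if "v \<in> V" for v
    unfolding c_def using abs_integral_sub_integral_clip_le[OF P Z[OF that] sq[OF that] _ \<epsilon> tail[OF that]] M
    by simp
  have MY: "integral\<^sup>N Pn (\<lambda>\<omega>. ennreal (MY \<omega>)) \<le> ennreal bound"
    unfolding Pn_def MY_def bound_def N_def using Y M
    by (intro order_trans[OF nn_integral_Max_abs_mean_le_rate[OF P V n _ s2, of "2 * M" Y]]) auto
  have "ennreal (Max ((\<lambda>v. \<bar>(1 / real n) * (\<Sum>i<n. Z v (\<omega> i)) - integral\<^sup>L F (Z v)\<bar>) ` V))
      \<le> ennreal (MY \<omega>) + ennreal (1 / real n) * (\<Sum>i<n. \<Sum>v\<in>V. R v (\<omega> i)) + ennreal \<epsilon>" for \<omega>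
  proof -
    define RS where "RS = (\<Sum>i<n. \<Sum>v\<in>V. \<bar>Z v (\<omega> i) - clip M (Z v (\<omega> i))\<bar>)"
    have "Max ((\<lambda>v. \<bar>(1 / real n) * (\<Sum>i<n. Z v (\<omega> i)) - integral\<^sup>L F (Z v)\<bar>) ` V)
        \<le> MY \<omega> + (1 / real n) * RS + \<epsilon>"
      unfolding RS_def MY_def using centre by (intro Max_abs_mean_sub_le[OF V n]) (auto simp: Y_def)
    hence "ennreal (Max ((\<lambda>v. \<bar>(1 / real n) * (\<Sum>i<n. Z v (\<omega> i)) - integral\<^sup>L F (Z v)\<bar>) ` V))
        \<le> ennreal (MY \<omega> + (1 / real n) * RS + \<epsilon>)" by (rule ennreal_leI)
    also have "\<dots> = ennreal (MY \<omega>) + ennreal (1 / real n) * ennreal RS + ennreal \<epsilon>"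
    proof -
      have "0 \<le> MY \<omega>" using V by (auto simp: MY_def Max_ge_iff)
      moreover have "0 \<le> RS" unfolding RS_def by (simp add: sum_nonneg)
      ultimately show ?thesis using \<epsilon> ennreal_mult'[of "1 / real n" RS] by simp
    qed
    also have "ennreal RS = (\<Sum>i<n. \<Sum>v\<in>V. R v (\<omega> i))"
      unfolding RS_def R_def by (simp add: sum_nonneg sum_ennreal)
    finally show ?thesis .
  qed
  hence "(\<integral>\<^sup>+\<omega>. ennreal (Max ((\<lambda>v. \<bar>(1 / real n) * (\<Sum>i<n. Z v (\<omega> i)) - integral\<^sup>L F (Z v)\<bar>) ` V)) \<partial>Pn)
      \<le> (\<integral>\<^sup>+\<omega>. ennreal (MY \<omega>) + ennreal (1 / real n) * (\<Sum>i<n. \<Sum>v\<in>V. R v (\<omega> i)) + ennreal \<epsilon> \<partial>Pn)"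
    by (intro nn_integral_mono)
  also have "\<dots> = integral\<^sup>N Pn (\<lambda>\<omega>. ennreal (MY \<omega>)) + (\<Sum>v\<in>V. integral\<^sup>N F (R v)) + ennreal \<epsilon>"
  proof -
    have [measurable]: "R v \<in> borel_measurable F" if "v \<in> V" for v unfolding R_def using that by measurable
    have "MY \<in> borel_measurable Pn"
      unfolding MY_def[abs_def] Pn_def using Y(1) by (rule borel_measurable_Max_abs_mean[OF V(1)])
    thus ?thesis
      using nn_integral_PiM_mean_sum[OF P n, of V R] borel_measurable_PiM_sum_sum[of V R F n]
      by (simp add: nn_integral_add nn_integral_cmult prob_space.emeasure_space_1 prob_space_PiM P Pn_def
          del: sum_ennreal)
  qed
  also have "\<dots> \<le> ennreal bound + (\<Sum>v\<in>V. ennreal \<epsilon>) + ennreal \<epsilon>"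
    using MY tail by (intro add_mono sum_mono) (auto simp: R_def)
  also have "(\<Sum>v\<in>V. ennreal \<epsilon>) = ennreal (N * \<epsilon>)"
    using \<epsilon> by (simp add: N_def ennreal_mult ennreal_of_nat_eq_real_of_nat)
  also have "ennreal bound + \<dots> + ennreal \<epsilon> = ennreal (bound + N * \<epsilon> + \<epsilon>)"
    using N \<epsilon> s2 M by (simp add: bound_def)
  also have "\<dots> \<le> ennreal (bound + 2 * N * \<epsilon>)"
    using mult_right_mono[OF N \<epsilon>] by (intro ennreal_leI) simp
  finally show ?thesis by (simp add: Pn_def bound_def N_def)
qed

section \<open>The Hoeffding projection\<close>

definition hoeffding_proj :: "'a measure \<Rightarrow> ('a \<times> 'a \<Rightarrow> real) \<Rightarrow> 'a \<Rightarrow> real" where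
  "hoeffding_proj F f x = (\<integral>y. f (x, y) \<partial>F) - integral\<^sup>L (F \<Otimes>\<^sub>M F) f"

lemma gfun_eq_hoeffding_proj: "gfun F h x (j, k) = hoeffding_proj F (\<lambda>z. h (fst z) (snd z) j k) x"
  by (simp add: gfun_def hoeffding_proj_def)

lemma borel_measurable_integral_section:
  fixes f :: "'a \<times> 'a \<Rightarrow> real"
  assumes "prob_space F" and "f \<in> borel_measurable (F \<Otimes>\<^sub>M F)"
  shows "(\<lambda>x. \<integral>y. f (x, y) \<partial>F) \<in> borel_measurable F"
proof -
  interpret prob_space F by fact
  have "(\<lambda>x. \<integral>y. (\<lambda>x y. f (x, y)) x y \<partial>F) \<in> borel_measurable F"
    using assms(2) by (intro borel_measurable_lebesgue_integral) simp
  thus ?thesis by simp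
qed

lemma borel_measurable_hoeffding_proj:
  assumes "prob_space F" and "f \<in> borel_measurable (F \<Otimes>\<^sub>M F)"
  shows "hoeffding_proj F f \<in> borel_measurable F"
  unfolding hoeffding_proj_def using borel_measurable_integral_section[OF assms] by measurable

lemma integral_hoeffding_proj:
  assumes "prob_space F" and f: "integrable (F \<Otimes>\<^sub>M F) f"
  shows "integral\<^sup>L F (hoeffding_proj F f) = 0"
proof -
  interpret prob_space F by fact
  interpret PP: pair_prob_space F F by unfold_locales
  have "integrable F (\<lambda>x. \<integral>y. f (x, y) \<partial>F)" using f by (rule PP.integrable_fst')
  moreover have "(\<integral>x. \<integral>y. f (x, y) \<partial>F \<partial>F) = integral\<^sup>L (F \<Otimes>\<^sub>M F) f" using f by (rule PP.integral_fst')
  ultimately show ?thesis unfolding hoeffding_proj_def by (simp add: prob_space)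
qed

lemma abs_hoeffding_proj_le:
  assumes P: "prob_space F" and f: "f \<in> borel_measurable (F \<Otimes>\<^sub>M F)"
    and m2: "(\<integral>\<^sup>+z. ennreal ((f z)\<^sup>2) \<partial>(F \<Otimes>\<^sub>M F)) \<le> 2"
  shows "\<bar>hoeffding_proj F f x\<bar> \<le> \<bar>\<integral>y. f (x, y) \<partial>F\<bar> + 3"
proof -
  interpret prob_space F by (rule P)
  interpret PP: pair_prob_space F F by unfold_locales
  have PP: "prob_space (F \<Otimes>\<^sub>M F)" by (rule PP.prob_space_axioms)
  have "ennreal \<bar>integral\<^sup>L (F \<Otimes>\<^sub>M F) f\<bar> \<le> (\<integral>\<^sup>+z. ennreal \<bar>f z\<bar> \<partial>(F \<Otimes>\<^sub>M F))"
  proof -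
    have "integrable (F \<Otimes>\<^sub>M F) f" using integrable_if_nn_integral_square_le[OF PP f, of 2] m2 by simp
    thus ?thesis using integral_norm_bound_ennreal by fastforce
  qed
  also have "\<dots> \<le> 1 + 2"
    using nn_integral_abs_le_1_plus_square[OF PP f] m2 by (meson add_left_mono order_trans)
  finally have "\<bar>integral\<^sup>L (F \<Otimes>\<^sub>M F) f\<bar> \<le> 3"
    by (metis ennreal_le_iff ennreal_numeral zero_le_numeral one_plus_numeral semiring_norm(3))
  thus ?thesis unfolding hoeffding_proj_def by linarith
qed

lemma nn_integral_exp_hoeffding_proj_le:
  assumes P: "prob_space F" and f[measurable]: "f \<in> borel_measurable (F \<Otimes>\<^sub>M F)" and B: "1 \<le> B"
    and m2: "(\<integral>\<^sup>+z. ennreal ((f z)\<^sup>2) \<partial>(F \<Otimes>\<^sub>M F)) \<le> 2"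
    and me: "(\<integral>\<^sup>+z. ennreal (exp (\<bar>f z\<bar> / B)) \<partial>(F \<Otimes>\<^sub>M F)) \<le> 2"
  shows "(\<integral>\<^sup>+x. ennreal (exp (\<bar>hoeffding_proj F f x\<bar> / B)) \<partial>F) \<le> ennreal (2 * exp 3)"
proof -
  define H where "H x = (\<integral>y. f (x, y) \<partial>F)" for x
  have [measurable]: "H \<in> borel_measurable F"
    unfolding H_def[abs_def] using P f by (rule borel_measurable_integral_section)
  have "(\<integral>\<^sup>+x. ennreal (exp (\<bar>H x\<bar> / B)) \<partial>F) \<le> (\<integral>\<^sup>+z. ennreal (exp (\<bar>f z\<bar> / B)) \<partial>(F \<Otimes>\<^sub>M F))"
    unfolding H_def
  proof (rule nn_integral_section_Jensen_abs[OF P f])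
    show "0 \<le> a \<Longrightarrow> a \<le> b \<Longrightarrow> exp (a / B) \<le> exp (b / B)" for a b
      using B by (simp add: divide_right_mono)
    show "\<exists>c. \<forall>y\<ge>0. exp (m / B) + c * (y - m) \<le> exp (y / B)" for m
    proof (intro exI allI impI)
      fix y :: real
      have "exp (m / B) * (1 + (y / B - m / B)) \<le> exp (y / B)" by (rule exp_ge_tangent)
      thus "exp (m / B) + exp (m / B) / B * (y - m) \<le> exp (y / B)" using B by (simp add: field_simps)
    qed
  qed auto
  hence H_exp: "(\<integral>\<^sup>+x. ennreal (exp (\<bar>H x\<bar> / B)) \<partial>F) \<le> 2" using me by simp
  have "exp (\<bar>hoeffding_proj F f x\<bar> / B) \<le> exp 3 * exp (\<bar>H x\<bar> / B)" for x
  proof -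
    have "\<bar>hoeffding_proj F f x\<bar> / B \<le> (\<bar>H x\<bar> + 3) / B"
      using abs_hoeffding_proj_le[OF P f m2] B by (intro divide_right_mono) (auto simp: H_def)
    also have "\<dots> \<le> 3 + \<bar>H x\<bar> / B" using B by (simp add: add_divide_distrib divide_le_eq)
    finally show ?thesis by (simp flip: exp_add)
  qed
  hence "(\<integral>\<^sup>+x. ennreal (exp (\<bar>hoeffding_proj F f x\<bar> / B)) \<partial>F)
      \<le> (\<integral>\<^sup>+x. ennreal (exp 3) * ennreal (exp (\<bar>H x\<bar> / B)) \<partial>F)"
    by (intro nn_integral_mono) (simp add: ennreal_leI flip: ennreal_mult)
  also have "\<dots> = ennreal (exp 3) * (\<integral>\<^sup>+x. ennreal (exp (\<bar>H x\<bar> / B)) \<partial>F)"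
    by (rule nn_integral_cmult) measurable
  also have "\<dots> \<le> ennreal (exp 3) * 2" using H_exp by (rule mult_left_mono) simp
  also have "\<dots> = ennreal (2 * exp 3)" by (simp add: ennreal_mult mult.commute)
  finally show ?thesis .
qed

lemma nn_integral_power4_hoeffding_proj_le:
  assumes P: "prob_space F" and f[measurable]: "f \<in> borel_measurable (F \<Otimes>\<^sub>M F)" and B: "1 \<le> B"
    and m2: "(\<integral>\<^sup>+z. ennreal ((f z)\<^sup>2) \<partial>(F \<Otimes>\<^sub>M F)) \<le> 2"
    and m4: "(\<integral>\<^sup>+z. ennreal ((f z) ^ 4) \<partial>(F \<Otimes>\<^sub>M F)) \<le> ennreal (2 * B\<^sup>2)"
  shows "(\<integral>\<^sup>+x. ennreal ((hoeffding_proj F f x) ^ 4) \<partial>F) \<le> ennreal (664 * B\<^sup>2)"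
proof -
  interpret prob_space F by (rule P)
  define H where "H x = (\<integral>y. f (x, y) \<partial>F)" for x
  have [measurable]: "H \<in> borel_measurable F"
    unfolding H_def[abs_def] using P f by (rule borel_measurable_integral_section)
  have "(\<integral>\<^sup>+x. ennreal (\<bar>H x\<bar> ^ 4) \<partial>F) \<le> (\<integral>\<^sup>+z. ennreal (\<bar>f z\<bar> ^ 4) \<partial>(F \<Otimes>\<^sub>M F))"
    unfolding H_def
  proof (rule nn_integral_section_Jensen_abs[OF P f])
    show "\<exists>c. \<forall>y\<ge>0. m ^ 4 + c * (y - m) \<le> y ^ 4" for m :: real
      using power4_ge_tangent[of m] by (intro exI[of _ "4 * m ^ 3"]) auto
  qed (auto intro: power_mono)
  hence H4: "(\<integral>\<^sup>+x. ennreal ((H x) ^ 4) \<partial>F) \<le> ennreal (2 * B\<^sup>2)" using m4 by simp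
  have "ennreal ((hoeffding_proj F f x) ^ 4) \<le> 8 * ennreal ((H x) ^ 4) + 648" for x
  proof -
    have "(hoeffding_proj F f x) ^ 4 = \<bar>hoeffding_proj F f x\<bar> ^ 4" by simp
    also have "\<dots> \<le> (\<bar>H x\<bar> + 3) ^ 4"
      using abs_hoeffding_proj_le[OF P f m2] by (intro power_mono) (auto simp: H_def)
    also have "\<dots> \<le> 8 * (\<bar>H x\<bar> ^ 4 + 3 ^ 4)" by (intro power4_add_le) auto
    finally have "ennreal ((hoeffding_proj F f x) ^ 4) \<le> ennreal (8 * (H x) ^ 4 + 648)"
      by (intro ennreal_leI) simp
    thus ?thesis by (simp add: ennreal_mult)
  qed
  hence "(\<integral>\<^sup>+x. ennreal ((hoeffding_proj F f x) ^ 4) \<partial>F) \<le> (\<integral>\<^sup>+x. 8 * ennreal ((H x) ^ 4) + 648 \<partial>F)"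
    by (intro nn_integral_mono)
  also have "\<dots> = 8 * (\<integral>\<^sup>+x. ennreal ((H x) ^ 4) \<partial>F) + 648"
    by (simp add: nn_integral_add nn_integral_cmult emeasure_space_1)
  also have "\<dots> \<le> 8 * ennreal (2 * B\<^sup>2) + 648" using H4 by (intro add_mono mult_left_mono) auto
  also have "\<dots> \<le> ennreal (664 * B\<^sup>2)"
  proof -
    have "1 \<le> B\<^sup>2" using B by (simp add: one_le_power)
    hence "ennreal (16 * B\<^sup>2 + 648) \<le> ennreal (664 * B\<^sup>2)" by (intro ennreal_leI) simp
    moreover have "8 * ennreal (2 * B\<^sup>2) + 648 = ennreal (16 * B\<^sup>2 + 648)"
      by (simp add: ennreal_mult mult.assoc[symmetric])
    ultimately show ?thesis by simp
  qed
  finally show ?thesis .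
qed

section \<open>Products of projections\<close>

lemma exp_midpoint_le: "exp ((u + v) / 2) \<le> (exp u + exp v) / (2::real)"
proof -
  have "exp ((u + v) / 2) = exp (u / 2) * exp (v / 2)" by (simp add: add_divide_distrib exp_add)
  also have "\<dots> \<le> ((exp (u / 2))\<^sup>2 + (exp (v / 2))\<^sup>2) / 2"
    using zero_le_power2[of "exp (u / 2) - exp (v / 2)"] by (simp add: power2_eq_square algebra_simps)
  also have "\<dots> = (exp u + exp v) / 2" by (simp flip: exp_double)
  finally show ?thesis .
qed

text \<open>Beyond the clipping level M the product satisfies |ab| \<le> (B x / 2)^2 with x = (|a| + |b|) / B,
  so its excess is paid for by the exponential moments at the cost of a factor exp (- sqrt M / (2 B)).\<close>
lemma abs_mult_sub_clip_le:
  fixes a b B M :: real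
  assumes B: "0 < B" and M: "0 \<le> M"
  shows "\<bar>a * b - clip M (a * b)\<bar> \<le> 4 * B\<^sup>2 * exp (- sqrt M / (2 * B)) * (exp (\<bar>a\<bar> / B) + exp (\<bar>b\<bar> / B))"
proof (cases "\<bar>a * b\<bar> \<le> M")
  case True
  thus ?thesis by (simp add: clip_eq_self)
next
  case False
  define x where "x = (\<bar>a\<bar> + \<bar>b\<bar>) / B"
  have x: "0 \<le> x" unfolding x_def using B by simp
  have ab: "\<bar>a * b\<bar> \<le> B\<^sup>2 * (x\<^sup>2 / 4)"
  proof -
    have "\<bar>a * b\<bar> \<le> (\<bar>a\<bar> + \<bar>b\<bar>)\<^sup>2 / 4"
      using zero_le_power2[of "\<bar>a\<bar> - \<bar>b\<bar>"] by (simp add: abs_mult power2_eq_square algebra_simps)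
    also have "\<bar>a\<bar> + \<bar>b\<bar> = B * x" unfolding x_def using B by simp
    finally show ?thesis by (simp add: power_mult_distrib)
  qed
  have "sqrt M \<le> B * x / 2"
  proof -
    have "M \<le> (B * x / 2)\<^sup>2" using False ab by (simp add: power_mult_distrib power_divide)
    hence "sqrt M \<le> sqrt ((B * x / 2)\<^sup>2)" by (rule real_sqrt_le_mono)
    thus ?thesis using B x by simp
  qed
  hence "0 \<le> x / 4 - sqrt M / (2 * B)" using B by (simp add: field_simps)
  have "\<bar>a * b - clip M (a * b)\<bar> \<le> \<bar>a * b\<bar>" using M by (simp add: clip_def)
  also have "\<dots> \<le> B\<^sup>2 * (x\<^sup>2 / 4)" by (rule ab)
  also have "\<dots> \<le> B\<^sup>2 * (8 * exp (x / 4))" using square_le_exp[OF x] by (intro mult_left_mono) auto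
  also have "\<dots> \<le> B\<^sup>2 * (8 * exp (x / 4) * exp (x / 4 - sqrt M / (2 * B)))"
    using \<open>0 \<le> x / 4 - sqrt M / (2 * B)\<close> by (intro mult_left_mono) (auto simp: mult_le_cancel_left1)
  also have "\<dots> = 8 * B\<^sup>2 * exp (- sqrt M / (2 * B)) * exp ((\<bar>a\<bar> / B + \<bar>b\<bar> / B) / 2)"
    by (simp add: x_def add_divide_distrib field_simps flip: exp_add)
  also have "\<dots> \<le> 8 * B\<^sup>2 * exp (- sqrt M / (2 * B)) * ((exp (\<bar>a\<bar> / B) + exp (\<bar>b\<bar> / B)) / 2)"
    by (intro mult_left_mono exp_midpoint_le) auto
  finally show ?thesis by simp
qed

lemma nn_integral_abs_mult_sub_clip_le:
  fixes Ga Gb :: "'a \<Rightarrow> real"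
  assumes [measurable]: "Ga \<in> borel_measurable F" "Gb \<in> borel_measurable F"
    and "(\<integral>\<^sup>+x. ennreal (exp (\<bar>Ga x\<bar> / B)) \<partial>F) \<le> ennreal C"
    and "(\<integral>\<^sup>+x. ennreal (exp (\<bar>Gb x\<bar> / B)) \<partial>F) \<le> ennreal C"
    and C: "0 \<le> C" and B: "0 < B" and M: "0 \<le> M"
  shows "(\<integral>\<^sup>+x. ennreal \<bar>Ga x * Gb x - clip M (Ga x * Gb x)\<bar> \<partial>F)
     \<le> ennreal (8 * B\<^sup>2 * exp (- sqrt M / (2 * B)) * C)"
proof -
  define c where "c = 4 * B\<^sup>2 * exp (- sqrt M / (2 * B))"
  have c: "0 \<le> c" unfolding c_def by simp
  have "(\<integral>\<^sup>+x. ennreal \<bar>Ga x * Gb x - clip M (Ga x * Gb x)\<bar> \<partial>F)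
      \<le> (\<integral>\<^sup>+x. ennreal c * (ennreal (exp (\<bar>Ga x\<bar> / B)) + ennreal (exp (\<bar>Gb x\<bar> / B))) \<partial>F)"
    using abs_mult_sub_clip_le[OF B M] c
    by (intro nn_integral_mono) (simp add: c_def ennreal_leI flip: ennreal_mult ennreal_plus)
  also have "\<dots> = ennreal c * ((\<integral>\<^sup>+x. ennreal (exp (\<bar>Ga x\<bar> / B)) \<partial>F) + (\<integral>\<^sup>+x. ennreal (exp (\<bar>Gb x\<bar> / B)) \<partial>F))"
    by (simp add: nn_integral_cmult nn_integral_add)
  also have "\<dots> \<le> ennreal c * (ennreal C + ennreal C)" using assms(3,4) by (intro mult_left_mono add_mono) auto
  also have "\<dots> = ennreal (8 * B\<^sup>2 * exp (- sqrt M / (2 * B)) * C)"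
    using c C by (simp add: c_def ennreal_mult[symmetric] ennreal_plus[symmetric] del: ennreal_plus)
  finally show ?thesis .
qed

lemma nn_integral_square_mult_le:
  fixes Ga Gb :: "'a \<Rightarrow> real"
  assumes [measurable]: "Ga \<in> borel_measurable F" "Gb \<in> borel_measurable F"
    and "(\<integral>\<^sup>+x. ennreal ((Ga x) ^ 4) \<partial>F) \<le> ennreal s"
    and "(\<integral>\<^sup>+x. ennreal ((Gb x) ^ 4) \<partial>F) \<le> ennreal s" and s: "0 \<le> s"
  shows "(\<integral>\<^sup>+x. ennreal ((Ga x * Gb x)\<^sup>2) \<partial>F) \<le> ennreal s"
proof -
  have "ennreal ((Ga x * Gb x)\<^sup>2) \<le> ennreal (1 / 2) * (ennreal ((Ga x) ^ 4) + ennreal ((Gb x) ^ 4))" for x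
  proof -
    have "(Ga x * Gb x)\<^sup>2 \<le> 1 / 2 * ((Ga x) ^ 4 + (Gb x) ^ 4)"
      using zero_le_power2[of "(Ga x)\<^sup>2 - (Gb x)\<^sup>2"]
      by (simp add: power2_eq_square power4_eq_xxxx algebra_simps)
    hence "ennreal ((Ga x * Gb x)\<^sup>2) \<le> ennreal (1 / 2 * ((Ga x) ^ 4 + (Gb x) ^ 4))" by (rule ennreal_leI)
    also have "\<dots> = ennreal (1 / 2) * ennreal ((Ga x) ^ 4 + (Gb x) ^ 4)" by (rule ennreal_mult') simp
    also have "ennreal ((Ga x) ^ 4 + (Gb x) ^ 4) = ennreal ((Ga x) ^ 4) + ennreal ((Gb x) ^ 4)"
      by (rule ennreal_plus) auto
    finally show ?thesis .
  qed
  hence "(\<integral>\<^sup>+x. ennreal ((Ga x * Gb x)\<^sup>2) \<partial>F)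
      \<le> (\<integral>\<^sup>+x. ennreal (1 / 2) * (ennreal ((Ga x) ^ 4) + ennreal ((Gb x) ^ 4)) \<partial>F)"
    by (intro nn_integral_mono)
  also have "\<dots> = ennreal (1 / 2) * ((\<integral>\<^sup>+x. ennreal ((Ga x) ^ 4) \<partial>F) + (\<integral>\<^sup>+x. ennreal ((Gb x) ^ 4) \<partial>F))"
    by (simp add: nn_integral_cmult nn_integral_add)
  also have "\<dots> \<le> ennreal (1 / 2) * (ennreal s + ennreal s)"
    using assms(3,4) by (intro mult_left_mono add_mono) auto
  also have "\<dots> = ennreal (1 / 2) * ennreal (s + s)" by (simp only: ennreal_plus[OF s s])
  also have "\<dots> = ennreal (1 / 2 * (s + s))" by (rule ennreal_mult'[symmetric]) simp
  also have "\<dots> = ennreal s" by simp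
  finally show ?thesis .
qed

lemma three_mul_le_power6:
  assumes p: "2 \<le> p" and N: "1 \<le> N" "N \<le> p ^ 4"
  shows "3 * N \<le> (p::real) ^ 6"
proof -
  have "3 \<le> p\<^sup>2" using power_mono[OF p, where n=2] by simp
  hence "3 * N \<le> p\<^sup>2 * p ^ 4" using N by (intro mult_mono) auto
  thus ?thesis by (simp flip: power_add)
qed

lemma ln_3_mul_le:
  fixes n p :: nat
  assumes p: "2 \<le> p" and n: "1 \<le> n" and N: "1 \<le> N" "N \<le> real p ^ 4"
  shows "ln (3 * N) \<le> 6 * ln (real p)" and "ln (3 * N * real n) \<le> 6 * ln (real n * real p)"
proof -
  have pN: "3 * N \<le> real p ^ 6" using p N by (intro three_mul_le_power6) auto
  hence "ln (3 * N) \<le> ln (real p ^ 6)" using N p by (subst ln_le_cancel_iff) auto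
  thus "ln (3 * N) \<le> 6 * ln (real p)" using p by (simp add: ln_realpow)
  have "real n \<le> real n ^ 6" using n by (simp add: self_le_power)
  hence "3 * N * real n \<le> real p ^ 6 * real n ^ 6" using pN N n by (intro mult_mono) auto
  also have "\<dots> = (real n * real p) ^ 6" by (simp add: power_mult_distrib)
  finally have "ln (3 * N * real n) \<le> ln ((real n * real p) ^ 6)"
    using N n p by (subst ln_le_cancel_iff) auto
  thus "ln (3 * N * real n) \<le> 6 * ln (real n * real p)" using n p by (simp add: ln_realpow)
qed

lemma varpi1_bound:
  fixes n p :: nat and B N :: real
  assumes p: "2 \<le> p" and n: "1 \<le> n" and B: "1 \<le> B" and N: "1 \<le> N" "N \<le> real p ^ 4"
  shows "2 * sqrt (664 * B\<^sup>2 * ln (3 * N) / real n)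
     + 2 * (2 * B * ln (3 * N * real n))\<^sup>2 * ln (3 * N) / real n
     + 2 * N * (16 * exp 3 * B\<^sup>2 / (3 * N * real n)) \<le> 5000 * varpi1 n p B"
proof -
  define Lp where "Lp = ln (real p)"
  define Q where "Q = ln (real n * real p)"
  define L where "L = ln (3 * N)"
  define T where "T = ln (3 * N * real n)"
  have n0: "0 < real n" using n by simp
  have "ln 2 \<le> Lp" unfolding Lp_def using p by (subst ln_le_cancel_iff) auto
  hence Lp: "1 / 2 \<le> Lp" using ln_2_ge_half by linarith
  have Q: "Lp \<le> Q" unfolding Lp_def Q_def using n p by (simp add: mult_le_cancel_right1)
  have L: "0 \<le> L" "L \<le> 6 * Lp" unfolding L_def Lp_def using N ln_3_mul_le[OF p n N] by auto
  have "1 * 1 \<le> 3 * N * real n" using N n by (intro mult_mono) auto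
  hence T: "0 \<le> T" "T \<le> 6 * Q" unfolding T_def Q_def using ln_3_mul_le[OF p n N] by auto
  have t1: "2 * sqrt (664 * B\<^sup>2 * L / real n) \<le> 128 * (sqrt (Lp / real n) * B)"
  proof -
    have "L * B\<^sup>2 \<le> 6 * (Lp * B\<^sup>2)" using mult_right_mono[OF L(2), of "B\<^sup>2"] by simp
    moreover have "0 \<le> Lp * B\<^sup>2" using Lp by simp
    moreover have "664 * B\<^sup>2 * L = 664 * (L * B\<^sup>2)" "(64 * B)\<^sup>2 * Lp = 4096 * (Lp * B\<^sup>2)"
      by (simp_all add: power_mult_distrib)
    ultimately have "664 * B\<^sup>2 * L \<le> (64 * B)\<^sup>2 * Lp" by linarith
    hence "664 * B\<^sup>2 * L / real n \<le> (64 * B)\<^sup>2 * (Lp / real n)" using n0 by (simp add: divide_right_mono)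
    hence "sqrt (664 * B\<^sup>2 * L / real n) \<le> sqrt ((64 * B)\<^sup>2) * sqrt (Lp / real n)"
      by (metis real_sqrt_le_mono real_sqrt_mult)
    also have "sqrt ((64 * B)\<^sup>2) = 64 * B" using B by (intro real_sqrt_unique) auto
    finally show ?thesis by simp
  qed
  have t2: "2 * (2 * B * T)\<^sup>2 * L / real n \<le> 1728 * (Lp * Q\<^sup>2 / real n * B\<^sup>2)"
  proof -
    have "T\<^sup>2 \<le> (6 * Q)\<^sup>2" using T by (intro power_mono) auto
    hence "B\<^sup>2 * T\<^sup>2 \<le> B\<^sup>2 * (6 * Q)\<^sup>2" by (intro mult_left_mono) auto
    hence "(2 * B * T)\<^sup>2 \<le> 4 * (B\<^sup>2 * (6 * Q)\<^sup>2)" by (simp add: power_mult_distrib)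
    hence "2 * (2 * B * T)\<^sup>2 * L \<le> 2 * (4 * (B\<^sup>2 * (6 * Q)\<^sup>2)) * (6 * Lp)"
      using L by (intro mult_mono) auto
    also have "\<dots> = 1728 * (Lp * Q\<^sup>2 * B\<^sup>2)" by (simp add: power2_eq_square algebra_simps)
    finally show ?thesis using n0 by (simp add: divide_right_mono)
  qed
  have t3: "2 * N * (16 * exp 3 * B\<^sup>2 / (3 * N * real n)) \<le> 2304 * (Lp * Q\<^sup>2 / real n * B\<^sup>2)"
  proof -
    have "2 * N * (16 * exp 3 * B\<^sup>2 / (3 * N * real n)) = 32 * exp 3 * B\<^sup>2 / (3 * real n)"
      using N n0 by (simp add: field_simps)
    also have "\<dots> \<le> 288 * (B\<^sup>2 / real n)"
      using mult_right_mono[OF exp_3_le_27, of "B\<^sup>2"] n0 by (simp add: divide_right_mono field_simps)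
    also have "\<dots> \<le> 288 * (8 * (Lp * Q\<^sup>2) * (B\<^sup>2 / real n))"
    proof -
      have "(1 / 2)\<^sup>2 \<le> Q\<^sup>2" using Lp Q by (intro power_mono) auto
      hence "1 / 2 * (1 / 4) \<le> Lp * Q\<^sup>2" using Lp by (intro mult_mono) (auto simp: power2_eq_square)
      hence "1 * (B\<^sup>2 / real n) \<le> 8 * (Lp * Q\<^sup>2) * (B\<^sup>2 / real n)" using n0 by (intro mult_right_mono) auto
      thus ?thesis by simp
    qed
    finally show ?thesis by simp
  qed
  have "varpi1 n p B = sqrt (Lp / real n) * B + Lp * Q\<^sup>2 / real n * B\<^sup>2"
    unfolding varpi1_def Lp_def Q_def ..
  moreover have "0 \<le> sqrt (Lp / real n) * B" "0 \<le> Lp * Q\<^sup>2 / real n * B\<^sup>2" using Lp B n0 by auto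
  ultimately show ?thesis using t1 t2 t3 unfolding L_def T_def by linarith
qed

lemma vech_idx_subset: "vech_idx p \<subseteq> {..<p} \<times> {..<p}"
  by (auto simp: vech_idx_def)

lemma finite_vech_idx: "finite (vech_idx p)"
  using vech_idx_subset by (rule finite_subset) auto

lemma vech_idx_nonempty: "0 < p \<Longrightarrow> vech_idx p \<noteq> {}"
  by (auto simp: vech_idx_def)

lemma card_vech_idx_pairs_le: "card (vech_idx p \<times> vech_idx p) \<le> p ^ 4"
proof -
  have "card (vech_idx p) \<le> p * p"
    using card_mono[OF _ vech_idx_subset] by (simp add: card_cartesian_product)
  hence "card (vech_idx p) * card (vech_idx p) \<le> (p * p) * (p * p)" by (intro mult_mono) auto
  thus ?thesis by (simp add: card_cartesian_product power4_eq_xxxx)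
qed

lemma gfun_moments:
  assumes P: "prob_space F" and B: "1 \<le> B"
    and h: "(\<lambda>z. h (fst z) (snd z) j k) \<in> borel_measurable (F \<Otimes>\<^sub>M F)"
    and moments:
      "(\<forall>l\<in>{0,1,2::nat}. (\<integral>\<^sup>+z. ennreal (\<bar>h (fst z) (snd z) j k\<bar> ^ (2 + l) / B ^ l) \<partial>(F \<Otimes>\<^sub>M F)) \<le> 2)
       \<and> (\<integral>\<^sup>+z. ennreal (exp (\<bar>h (fst z) (snd z) j k\<bar> / B)) \<partial>(F \<Otimes>\<^sub>M F)) \<le> 2"
  defines "g \<equiv> \<lambda>x. gfun F h x (j, k)"
  shows "g \<in> borel_measurable F" and "integral\<^sup>L F g = 0"
    and "(\<integral>\<^sup>+x. ennreal (exp (\<bar>g x\<bar> / B)) \<partial>F) \<le> ennreal (2 * exp 3)"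
    and "(\<integral>\<^sup>+x. ennreal ((g x) ^ 4) \<partial>F) \<le> ennreal (664 * B\<^sup>2)"
proof -
  interpret prob_space F by (rule P)
  interpret PP: pair_prob_space F F by unfold_locales
  define f where "f = (\<lambda>z. h (fst z) (snd z) j k)"
  have f: "f \<in> borel_measurable (F \<Otimes>\<^sub>M F)" using h by (simp add: f_def)
  have g: "g = hoeffding_proj F f" by (simp add: fun_eq_iff g_def f_def gfun_eq_hoeffding_proj)
  have moment: "(\<integral>\<^sup>+z. ennreal (\<bar>f z\<bar> ^ (2 + l) / B ^ l) \<partial>(F \<Otimes>\<^sub>M F)) \<le> 2" if "l \<in> {0, 1, 2}" for l
    using moments that by (simp only: f_def)
  have m2: "(\<integral>\<^sup>+z. ennreal ((f z)\<^sup>2) \<partial>(F \<Otimes>\<^sub>M F)) \<le> 2"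
    using moment[of 0] by simp
  have me: "(\<integral>\<^sup>+z. ennreal (exp (\<bar>f z\<bar> / B)) \<partial>(F \<Otimes>\<^sub>M F)) \<le> 2"
    using moments by (simp add: f_def)
  have "(\<integral>\<^sup>+z. ennreal ((f z) ^ 4) \<partial>(F \<Otimes>\<^sub>M F))
      = ennreal (B\<^sup>2) * (\<integral>\<^sup>+z. ennreal (\<bar>f z\<bar> ^ (2 + 2) / B ^ 2) \<partial>(F \<Otimes>\<^sub>M F))"
    using B f by (subst nn_integral_cmult[symmetric]) (auto intro!: nn_integral_cong simp flip: ennreal_mult)
  also have "\<dots> \<le> ennreal (B\<^sup>2) * 2" using moment[of 2] by (intro mult_left_mono) auto
  finally have m4: "(\<integral>\<^sup>+z. ennreal ((f z) ^ 4) \<partial>(F \<Otimes>\<^sub>M F)) \<le> ennreal (2 * B\<^sup>2)"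
    by (simp add: ennreal_mult mult.commute)
  have "integrable (F \<Otimes>\<^sub>M F) f"
    using integrable_if_nn_integral_square_le[OF PP.prob_space_axioms f, of 2] m2 by simp
  show "g \<in> borel_measurable F" unfolding g using P f by (rule borel_measurable_hoeffding_proj)
  show "integral\<^sup>L F g = 0" unfolding g using P \<open>integrable (F \<Otimes>\<^sub>M F) f\<close> by (rule integral_hoeffding_proj)
  show "(\<integral>\<^sup>+x. ennreal (exp (\<bar>g x\<bar> / B)) \<partial>F) \<le> ennreal (2 * exp 3)"
    unfolding g using P f B m2 me by (rule nn_integral_exp_hoeffding_proj_le)
  show "(\<integral>\<^sup>+x. ennreal ((g x) ^ 4) \<partial>F) \<le> ennreal (664 * B\<^sup>2)"
    unfolding g using P f B m2 m4 by (rule nn_integral_power4_hoeffding_proj_le)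
qed

lemma Delta1_eq_Max:
  assumes "\<And>a. a \<in> vech_idx p \<Longrightarrow> integral\<^sup>L F (\<lambda>x. gfun F h x a) = 0"
  shows "Delta1 p F h n \<omega> = Max ((\<lambda>v. \<bar>(1 / real n) * (\<Sum>i<n. gfun F h (\<omega> i) (fst v) * gfun F h (\<omega> i) (snd v))
      - (\<integral>x. gfun F h x (fst v) * gfun F h x (snd v) \<partial>F)\<bar>) ` (vech_idx p \<times> vech_idx p))"
  unfolding Delta1_def Gamma_g_def using assms by (intro arg_cong[where f=Max]) force

lemma nn_integral_Delta1_le:
  fixes n p :: nat and B :: real and F :: "pt measure" and h :: kern
  assumes p: "2 \<le> p" and n: "1 \<le> n" and B: "1 \<le> B" and P: "prob_space F"
    and h: "\<forall>m<p. \<forall>k<p. (\<lambda>z. h (fst z) (snd z) m k) \<in> borel_measurable (F \<Otimes>\<^sub>M F)"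
    and moments: "\<forall>m<p. \<forall>k<p.
       (\<forall>l\<in>{0,1,2::nat}. (\<integral>\<^sup>+z. ennreal (\<bar>h (fst z) (snd z) m k\<bar> ^ (2 + l) / B ^ l) \<partial>(F \<Otimes>\<^sub>M F)) \<le> 2)
       \<and> (\<integral>\<^sup>+z. ennreal (exp (\<bar>h (fst z) (snd z) m k\<bar> / B)) \<partial>(F \<Otimes>\<^sub>M F)) \<le> 2"
  shows "(\<integral>\<^sup>+\<omega>. ennreal (Delta1 p F h n \<omega>) \<partial>(PiM {..<n} (\<lambda>_. F))) \<le> ennreal (5000 * varpi1 n p B)"
proof -
  define V where "V = vech_idx p \<times> vech_idx p"
  define N where "N = real (card V)"
  define Z where "Z v = (\<lambda>x. gfun F h x (fst v) * gfun F h x (snd v))" for v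
  define M where "M = (2 * B * ln (3 * N * real n))\<^sup>2"
  define \<epsilon> where "\<epsilon> = 8 * B\<^sup>2 * exp (- sqrt M / (2 * B)) * (2 * exp 3)"
  have V: "finite V" "V \<noteq> {}" using p by (auto simp: V_def finite_vech_idx vech_idx_nonempty)
  have N: "1 \<le> N" "N \<le> real p ^ 4"
    using V card_vech_idx_pairs_le[of p] by (auto simp: N_def Suc_le_eq card_gt_0_iff V_def
        simp flip: of_nat_power of_nat_le_iff)
  have "1 * 1 \<le> N * real n" using N n by (intro mult_mono) auto
  hence T: "0 < ln (3 * N * real n)" by simp
  hence M: "0 < M" using B by (simp add: M_def)
  have "sqrt M = 2 * B * ln (3 * N * real n)" using B T by (simp add: M_def)
  hence "exp (- sqrt M / (2 * B)) = 1 / (3 * N * real n)"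
    using B N n by (simp add: exp_minus inverse_eq_divide)
  hence \<epsilon>: "\<epsilon> = 16 * exp 3 * B\<^sup>2 / (3 * N * real n)" by (simp add: \<epsilon>_def)
  have g: "(\<lambda>x. gfun F h x a) \<in> borel_measurable F" "integral\<^sup>L F (\<lambda>x. gfun F h x a) = 0"
      "(\<integral>\<^sup>+x. ennreal (exp (\<bar>gfun F h x a\<bar> / B)) \<partial>F) \<le> ennreal (2 * exp 3)"
      "(\<integral>\<^sup>+x. ennreal ((gfun F h x a) ^ 4) \<partial>F) \<le> ennreal (664 * B\<^sup>2)" if "a \<in> vech_idx p" for a
    using that vech_idx_subset[of p] gfun_moments[OF P B, of h "fst a" "snd a"] h moments by auto
  have Z: "Z v \<in> borel_measurable F"
      "(\<integral>\<^sup>+x. ennreal ((Z v x)\<^sup>2) \<partial>F) \<le> ennreal (664 * B\<^sup>2)"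
      "(\<integral>\<^sup>+x. ennreal \<bar>Z v x - clip M (Z v x)\<bar> \<partial>F) \<le> ennreal \<epsilon>" if "v \<in> V" for v
  proof -
    have a: "fst v \<in> vech_idx p" "snd v \<in> vech_idx p" using that by (auto simp: V_def)
    show "Z v \<in> borel_measurable F" unfolding Z_def using g(1)[OF a(1)] g(1)[OF a(2)] by measurable
    show "(\<integral>\<^sup>+x. ennreal ((Z v x)\<^sup>2) \<partial>F) \<le> ennreal (664 * B\<^sup>2)"
      unfolding Z_def using B by (intro nn_integral_square_mult_le g a) auto
    show "(\<integral>\<^sup>+x. ennreal \<bar>Z v x - clip M (Z v x)\<bar> \<partial>F) \<le> ennreal \<epsilon>"
      unfolding Z_def \<epsilon>_def using B M by (intro nn_integral_abs_mult_sub_clip_le g a) auto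
  qed
  have "Delta1 p F h n \<omega> = Max ((\<lambda>v. \<bar>(1 / real n) * (\<Sum>i<n. Z v (\<omega> i)) - integral\<^sup>L F (Z v)\<bar>) ` V)" for \<omega>
    using Delta1_eq_Max[of p F h n \<omega>] g(2) by (simp add: V_def Z_def)
  hence "(\<integral>\<^sup>+\<omega>. ennreal (Delta1 p F h n \<omega>) \<partial>(PiM {..<n} (\<lambda>_. F)))
      \<le> ennreal (2 * sqrt (664 * B\<^sup>2 * ln (3 * N) / real n) + 2 * M * ln (3 * N) / real n + 2 * N * \<epsilon>)"
    using nn_integral_Max_abs_mean_truncated_le[OF P V _ M _ _ Z] n B \<epsilon> N
    by (simp add: N_def)
  also have "\<dots> \<le> ennreal (5000 * varpi1 n p B)"
    using varpi1_bound[OF p n B N] unfolding \<epsilon> M_def by (intro ennreal_leI) simp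
  finally show ?thesis .
qed

theorem lemmaC3:
  shows "\<exists>K>0. \<forall>(n::nat) (p::nat) (B::real) (F::pt measure) (h::kern).
    p \<ge> 2 \<longrightarrow> n \<ge> 1 \<longrightarrow> B \<ge> 1 \<longrightarrow>
    prob_space F \<longrightarrow> sets F = sets (PiM {..<p} (\<lambda>_. borel)) \<longrightarrow>
    (\<forall>m<p. \<forall>k<p. (\<lambda>z. h (fst z) (snd z) m k) \<in> borel_measurable (F \<Otimes>\<^sub>M F)) \<longrightarrow>
    (\<forall>x\<in>space F. \<forall>y\<in>space F. h x y = h y x) \<longrightarrow>
    (\<forall>x\<in>space F. \<forall>y\<in>space F. \<forall>m k. h x y m k = h x y k m) \<longrightarrow>
    (\<forall>m<p. \<forall>k<p.
       (\<forall>l\<in>{0,1,2::nat}. (\<integral>\<^sup>+z. ennreal (\<bar>h (fst z) (snd z) m k\<bar> ^ (2 + l) / B ^ l) \<partial>(F \<Otimes>\<^sub>M F)) \<le> 2)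
       \<and> (\<integral>\<^sup>+z. ennreal (exp (\<bar>h (fst z) (snd z) m k\<bar> / B)) \<partial>(F \<Otimes>\<^sub>M F)) \<le> 2) \<longrightarrow>
    (\<integral>\<^sup>+\<omega>. ennreal (Delta1 p F h n \<omega>) \<partial>(PiM {..<n} (\<lambda>_. F)))
      \<le> ennreal (K * varpi1 n p B)"
  by (intro exI[of _ 5000] conjI allI impI nn_integral_Delta1_le) auto

end
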